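(* Let $T$ be a string of length $N$ and let $z$ be the size of its LZ77 factorization. The number of letters (variables) of the run-length straight-line program $\mathsf{TtoG}(T)$ is $O(z \lg (N/z))$.
   Context: Construction $\mathsf{TtoG}$: Let $T_0$ be obtained from $T$ by replacing each character by a letter deriving it. For $h=0,1,\ldots$ until $|T_h|=1$: if $h$ is even, replace every maximal run $c^d$ ($d\ge2$) of $T_h$ by a fresh letter with rule $\to c^d$ (equal $(c,d)$ get the same letter). If $h$ is odd, compute a partition $(L_h,R_h)$ of the letters of $T_h$: process letters $c$ in increasing order, adding $c$ to $L_h$ if the number of occurrences in $T_h$ of length-2 substrings made of $c$ and a letter already in $R_h$ (either order) is at least the number with a letter already in $L_h$, else to $R_h$; finally swap $L_h,R_h$ if occurrences of pairs in $L_hR_h$ are fewer than those in $R_hL_h$. Replace every occurrence of a pair $ab$ with $a\in L_h$, $b\in R_h$ by a fresh letter with rule $\to ab$ (equal pairs get the same letter). All letters created, with their rules, form $\mathsf{TtoG}(T)$. The LZ77 factorization (without self-reference) of $T$ is $T=f_1\cdots f_z$ where, with $p_i=|f_1\cdots f_{i-1}|+1$, $f_i=T[p_i]$ if $T[p_i]$ does not occur in $T[1..p_i-1]$, and otherwise $f_i$ is the longest prefix of $T[p_i..N]$ occurring in $T[1..p_i-1]$. *)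

theory Defs
  imports Complex_Main "HOL-Library.Sublist"
begin

text \<open>At position p (0-indexed, i.e. p+1 in the paper),
  the phrase has length 1 if T!p does not occur in T[0..p-1], otherwise it is the
  length of the longest prefix of drop p T that occurs (as a contiguous substring)
  in take p T.\<close>

definition lz_len :: "'a list \<Rightarrow> nat \<Rightarrow> nat" where
  "lz_len T p =
     (if T ! p \<notin> set (take p T) then 1
      else (GREATEST l. l \<le> length T - p \<and> sublist (take l (drop p T)) (take p T)))"

text \<open>Number of phrases of the LZ77 factorization of drop p T.  (The max 1 only
  makes termination syntactically obvious; lz_len is always at least 1.)\<close>
function lz_count :: "'a list \<Rightarrow> nat \<Rightarrow> nat" where
  "lz_count T p = (if length T \<le> p then 0 else Suc (lz_count T (p + max 1 (lz_len T p))))"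
  by pat_completeness auto
termination by (relation "measure (\<lambda>(T, p). length T - p)") auto

definition lz77_size :: "'a list \<Rightarrow> nat" where
  "lz77_size T = lz_count T 0"

text \<open>Letters: a letter deriving a character, a run letter created at level h with
  rule c^d, or a pair letter created at level h with rule ab.  The level tag makes
  letters created at different levels fresh.\<close>
datatype 'a sym = Chr 'a | Run nat "'a sym" nat | Pr nat "'a sym" "'a sym"

function run_compress :: "nat \<Rightarrow> 'a sym list \<Rightarrow> 'a sym list" where
  "run_compress h [] = []"
| "run_compress h (x # xs) =
     (let k = length (takeWhile (\<lambda>y. y = x) xs)
      in (if k = 0 then x else Run h x (Suc k)) # run_compress h (dropWhile (\<lambda>y. y = x) xs))"
  by pat_completeness auto
termination
  by (relation "measure (\<lambda>(h, xs). length xs)") (auto simp: le_imp_less_Suc length_dropWhile_le)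

definition adj_pairs :: "'b list \<Rightarrow> ('b \<times> 'b) list" where
  "adj_pairs xs = zip xs (tl xs)"

definition pair_cnt :: "'b list \<Rightarrow> 'b \<Rightarrow> 'b set \<Rightarrow> nat" where
  "pair_cnt xs c S = length (filter (\<lambda>(a, b). (a = c \<and> b \<in> S) \<or> (b = c \<and> a \<in> S)) (adj_pairs xs))"

definition dir_cnt :: "'b list \<Rightarrow> 'b set \<Rightarrow> 'b set \<Rightarrow> nat" where
  "dir_cnt xs A B = length (filter (\<lambda>(a, b). a \<in> A \<and> b \<in> B) (adj_pairs xs))"

definition greedy_step :: "'b list \<Rightarrow> 'b \<Rightarrow> 'b set \<times> 'b set \<Rightarrow> 'b set \<times> 'b set" where
  "greedy_step xs c LR =
     (let (L, R) = LR in
      if pair_cnt xs c R \<ge> pair_cnt xs c L then (insert c L, R) else (L, insert c R))"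

definition partition_LR :: "('b \<Rightarrow> nat) \<Rightarrow> 'b list \<Rightarrow> 'b set \<times> 'b set" where
  "partition_LR rk xs =
     (let (L, R) = fold (greedy_step xs) (sort_key rk (remdups xs)) ({}, {})
      in if dir_cnt xs L R < dir_cnt xs R L then (R, L) else (L, R))"

fun pair_replace :: "nat \<Rightarrow> 'a sym set \<Rightarrow> 'a sym set \<Rightarrow> 'a sym list \<Rightarrow> 'a sym list" where
  "pair_replace h L R (a # b # xs) =
     (if a \<in> L \<and> b \<in> R then Pr h a b # pair_replace h L R xs
      else a # pair_replace h L R (b # xs))"
| "pair_replace h L R xs = xs"

definition ttog_step :: "('a sym \<Rightarrow> nat) \<Rightarrow> nat \<Rightarrow> 'a sym list \<Rightarrow> 'a sym list" where
  "ttog_step rk h xs =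
     (if even h then run_compress h xs
      else (let (L, R) = partition_LR rk xs in pair_replace h L R xs))"

fun ttog_level :: "('a sym \<Rightarrow> nat) \<Rightarrow> 'a list \<Rightarrow> nat \<Rightarrow> 'a sym list" where
  "ttog_level rk T 0 = map Chr T"
| "ttog_level rk T (Suc h) = ttog_step rk h (ttog_level rk T h)"

text \<open>All letters of TtoG(T): the letters of every T_h reached before the loop stops
  (i.e. all T_h such that no earlier T_h' has length 1).\<close>
definition ttog_letters :: "('a sym \<Rightarrow> nat) \<Rightarrow> 'a list \<Rightarrow> 'a sym set" where
  "ttog_letters rk T =
     (\<Union> h \<in> {h. \<forall>h' < h. length (ttog_level rk T h') \<noteq> 1}. set (ttog_level rk T h))"

end

theory Submission
  imports Defs
begin

text \<open>Split T along its LZ77 factorization into z blocks, each made of a copy of an earlier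
  fragment (its core) and at most one uncovered letter.  Such a copy family survives every level
  of TtoG: replacing runs or pairs by single letters groups a fragment according to its
  neighbourhood only, so a core shrunk to the groups strictly between cut points near its ends is
  again a copy of an earlier fragment, and only O(1) groups per block become uncovered.  The
  leftmost occurrence of a letter is never in a core, hence at most (2 + 8h) z distinct letters
  appear up to level h.  On the other hand two consecutive levels shrink the text by a factor 3/4
  (once runs are gone the greedy partition pairs up a quarter of the adjacent positions), and each
  letter created later shortens the text.  Stopping the count after O(log (N/z)) levels, when the
  text has length at most z + 1, gives the bound O(z log (N/z)).\<close>

definition group_start :: "'b list list \<Rightarrow> nat \<Rightarrow> nat" where
  "group_start gs j = length (concat (take j gs))"

definition group_starts :: "'b list list \<Rightarrow> nat set" where
  "group_starts gs = {group_start gs j | j. j < length gs}"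

definition groups_before :: "'b list list \<Rightarrow> nat \<Rightarrow> nat" where
  "groups_before gs u = card {j. j < length gs \<and> group_start gs j < u}"

lemma group_start_0 [simp]: "group_start gs 0 = 0"
  by (simp add: group_start_def)

lemma group_start_Suc: "j < length gs \<Longrightarrow> group_start gs (Suc j) = group_start gs j + length (gs ! j)"
  by (simp add: group_start_def take_Suc_conv_app_nth)

lemma group_start_Cons_Suc: "group_start (g # gs) (Suc j) = length g + group_start gs j"
  by (simp add: group_start_def)

lemma group_start_append: "group_start (G1 @ G2) (length G1) = length (concat G1)"
  by (simp add: group_start_def)

lemma group_start_length: "length gs \<le> k \<Longrightarrow> group_start gs k = length (concat gs)"
  by (simp add: group_start_def)

lemma group_start_mono: "i \<le> j \<Longrightarrow> group_start gs i \<le> group_start gs j"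
proof -
  assume "i \<le> j"
  then have "take j gs = take i gs @ take (j - i) (drop i gs)"
    by (metis le_add_diff_inverse take_add)
  then show ?thesis by (simp add: group_start_def)
qed

lemma group_start_strict_mono:
  assumes "[] \<notin> set gs" "i < j" "j \<le> length gs"
  shows "group_start gs i < group_start gs j"
proof -
  have "j - 1 < length gs" using assms by simp
  then have "gs ! (j - 1) \<noteq> []" using assms(1) nth_mem by fastforce
  then have "group_start gs (j - 1) < group_start gs j"
    using group_start_Suc[of "j - 1" gs] assms by auto
  moreover have "group_start gs i \<le> group_start gs (j - 1)" using assms by (intro group_start_mono) auto
  ultimately show ?thesis by simp
qed

lemma group_starts_Cons: "group_starts (g # gs) = insert 0 ((+) (length g) ` group_starts gs)"
proof
  show "group_starts (g # gs) \<subseteq> insert 0 ((+) (length g) ` group_starts gs)"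
  proof
    fix k assume "k \<in> group_starts (g # gs)"
    then obtain j where j: "k = group_start (g # gs) j" "j < Suc (length gs)"
      unfolding group_starts_def by auto
    then show "k \<in> insert 0 ((+) (length g) ` group_starts gs)"
      by (cases j) (auto simp: group_start_Cons_Suc group_starts_def)
  qed
next
  have "group_start (g # gs) (Suc j) \<in> group_starts (g # gs)" if "j < length gs" for j
    using that unfolding group_starts_def by fastforce
  moreover have "group_start (g # gs) 0 \<in> group_starts (g # gs)"
    unfolding group_starts_def by fastforce
  ultimately show "insert 0 ((+) (length g) ` group_starts gs) \<subseteq> group_starts (g # gs)"
    by (auto simp: group_start_Cons_Suc group_starts_def)
qed

lemma sum_length_groups:
  assumes "A \<le> B" "B \<le> length gs"
  shows "(\<Sum>j\<in>{A..<B}. length (gs ! j)) = group_start gs B - group_start gs A"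
  using assms
proof (induction B rule: dec_induct)
  case (step B)
  then show ?case using group_start_Suc[of B gs] group_start_mono[of A B gs] by simp
qed simp

lemma downward_closed_eq_lessThan:
  fixes S :: "nat set"
  assumes "finite S" "\<And>j i. j \<in> S \<Longrightarrow> i < j \<Longrightarrow> i \<in> S"
  shows "S = {..<card S}"
proof (cases "S = {}")
  case False
  have "S = {..Max S}"
  proof
    show "{..Max S} \<subseteq> S"
      using assms Max_in[OF assms(1) False] by (auto simp: order.order_iff_strict)
  qed (use assms in auto)
  then show ?thesis by (metis card_atMost lessThan_Suc_atMost)
qed simp

lemma groups_before_eq_lessThan:
  assumes "[] \<notin> set gs"
  shows "{j. j < length gs \<and> group_start gs j < u} = {..<groups_before gs u}"
  unfolding groups_before_def
proof (rule downward_closed_eq_lessThan)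
  fix j i assume "j \<in> {j. j < length gs \<and> group_start gs j < u}" "i < j"
  then show "i \<in> {j. j < length gs \<and> group_start gs j < u}"
    using group_start_strict_mono[OF assms, of i j] by auto
qed auto

lemma groups_before_0 [simp]: "groups_before gs 0 = 0"
  by (simp add: groups_before_def)

lemma less_groups_before_iff:
  "[] \<notin> set gs \<Longrightarrow> j < groups_before gs u \<longleftrightarrow> j < length gs \<and> group_start gs j < u"
  using groups_before_eq_lessThan[of gs u] by blast

lemma groups_before_le_length: "groups_before gs u \<le> length gs"
  unfolding groups_before_def by (rule card_mono[of "{..<length gs}", simplified]) auto

lemma groups_before_mono: "u \<le> v \<Longrightarrow> groups_before gs u \<le> groups_before gs v"
  unfolding groups_before_def by (intro card_mono) auto

lemma groups_before_group_start:
  assumes "[] \<notin> set gs" "k \<le> length gs"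
  shows "groups_before gs (group_start gs k) = k"
proof -
  have "j < groups_before gs (group_start gs k) \<longleftrightarrow> j < k" for j
    using less_groups_before_iff[OF assms(1)] group_start_strict_mono[OF assms(1)] group_start_mono assms(2)
    by (metis le_less_trans linorder_not_le order.strict_trans1)
  then show ?thesis by (metis linorder_neqE_nat less_irrefl)
qed

lemma groups_before_length_concat:
  "[] \<notin> set gs \<Longrightarrow> groups_before gs (length (concat gs)) = length gs"
  using groups_before_group_start[of gs "length gs"] by (simp add: group_start_length)

text \<open>Groups starting in an interval of length d have total length at most d plus the length
  of the last of them; truncating group lengths at 2 bounds the sum by d + 1.\<close>

lemma sum_min2_groups_between:
  assumes "[] \<notin> set gs" "u \<le> v"
  shows "(\<Sum>j\<in>{groups_before gs u..<groups_before gs v}. min (length (gs ! j)) 2) \<le> v - u + 1"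
proof (cases "groups_before gs v \<le> groups_before gs u")
  case False
  define A where "A = groups_before gs u"
  define J where "J = groups_before gs v - 1"
  have AJ: "A \<le> J" "J < groups_before gs v" using False by (auto simp: A_def J_def)
  have J: "J < length gs" using AJ groups_before_le_length[of gs v] by simp
  have stJ: "group_start gs J < v" using less_groups_before_iff[OF assms(1)] AJ by blast
  have stA: "u \<le> group_start gs A"
    using less_groups_before_iff[OF assms(1), of A u] AJ J by (simp add: A_def)
  have "{groups_before gs u..<groups_before gs v} = insert J {A..<J}" using AJ by (auto simp: A_def J_def)
  then have "(\<Sum>j\<in>{groups_before gs u..<groups_before gs v}. min (length (gs ! j)) 2)
      = min (length (gs ! J)) 2 + (\<Sum>j\<in>{A..<J}. min (length (gs ! j)) 2)" by simp
  also have "\<dots> \<le> 2 + (\<Sum>j\<in>{A..<J}. length (gs ! j))"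
    by (intro add_mono sum_mono) auto
  also have "\<dots> = 2 + (group_start gs J - group_start gs A)" using J by (simp add: sum_length_groups[OF AJ(1)])
  also have "\<dots> \<le> v - u + 1" using stJ stA group_start_mono[OF AJ(1), of gs] by linarith
  finally show ?thesis .
qed simp

lemma sum_min2_eq_card:
  fixes f :: "'a \<Rightarrow> nat"
  assumes "finite S" "\<forall>j\<in>S. 1 \<le> f j"
  shows "(\<Sum>j\<in>S. min (f j) 2) = card S + card {j\<in>S. 2 \<le> f j}"
proof -
  have "(\<Sum>j\<in>S. min (f j) 2) = (\<Sum>j\<in>S. 1 + (if 2 \<le> f j then 1 else 0))"
    using assms(2) by (intro sum.cong) auto
  also have "\<dots> = (\<Sum>j\<in>S. 1) + (\<Sum>j\<in>S. (if 2 \<le> f j then 1 else 0))"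
    by (rule sum.distrib)
  also have "(\<Sum>j\<in>S. (if 2 \<le> f j then 1 else 0)) = card {j\<in>S. 2 \<le> f j}"
    using assms(1) by (simp add: sum.If_cases Int_def)
  finally show ?thesis by simp
qed


subsection \<open>Copy families\<close>

definition weighted_length :: "('s \<Rightarrow> nat) \<Rightarrow> 's list \<Rightarrow> nat" where
  "weighted_length wt xs = sum_list (map wt xs)"

lemma weighted_length_append [simp]:
  "weighted_length wt (xs @ ys) = weighted_length wt xs + weighted_length wt ys"
  by (simp add: weighted_length_def)

lemma weighted_length_take_mono:
  "i \<le> j \<Longrightarrow> weighted_length wt (take i xs) \<le> weighted_length wt (take j xs)"
  by (metis le_add_diff_inverse take_add weighted_length_append le_add1)

lemma less_of_weighted_length_take_less:
  "weighted_length wt (take i xs) < weighted_length wt (take j xs) \<Longrightarrow> i < j"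
  using weighted_length_take_mono[of j i wt xs] by (meson not_le)

text \<open>In a block [B, B') the core [C1, C2) is a copy of the fragment starting at S.  The source
  must precede the core in weighted length (i.e. in the expanded text), which unlike plain
  positions is preserved when xs is compressed.\<close>

definition copy_block ::
  "('s \<Rightarrow> nat) \<Rightarrow> 's list \<Rightarrow> nat \<Rightarrow> nat \<Rightarrow> nat \<Rightarrow> nat \<Rightarrow> nat \<Rightarrow> bool" where
  "copy_block wt xs B C1 C2 S B' \<longleftrightarrow> B \<le> C1 \<and> C1 \<le> C2 \<and> C2 \<le> B' \<and>
     (C1 < C2 \<longrightarrow> weighted_length wt (take S xs) < weighted_length wt (take C1 xs) \<and>
        S + (C2 - C1) \<le> length xs \<and> (\<forall>t < C2 - C1. xs ! (S + t) = xs ! (C1 + t)))"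

definition copy_family ::
  "('s \<Rightarrow> nat) \<Rightarrow> 's list \<Rightarrow> nat \<Rightarrow> (nat \<Rightarrow> nat) \<Rightarrow> (nat \<Rightarrow> nat) \<Rightarrow> (nat \<Rightarrow> nat) \<Rightarrow> (nat \<Rightarrow> nat)
     \<Rightarrow> bool" where
  "copy_family wt xs z b c1 c2 src \<longleftrightarrow> b 0 = 0 \<and> b z = length xs \<and>
     (\<forall>i<z. copy_block wt xs (b i) (c1 i) (c2 i) (src i) (b (Suc i)))"

definition uncovered :: "nat \<Rightarrow> (nat \<Rightarrow> nat) \<Rightarrow> (nat \<Rightarrow> nat) \<Rightarrow> (nat \<Rightarrow> nat) \<Rightarrow> nat" where
  "uncovered z b c1 c2 = (\<Sum>i<z. (c1 i - b i) + (b (Suc i) - c2 i))"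

definition uncovered_positions :: "nat \<Rightarrow> (nat \<Rightarrow> nat) \<Rightarrow> (nat \<Rightarrow> nat) \<Rightarrow> (nat \<Rightarrow> nat) \<Rightarrow> nat set" where
  "uncovered_positions z b c1 c2 = (\<Union>i<z. {b i..<c1 i} \<union> {c2 i..<b (Suc i)})"

lemma copy_family_boundary_mono:
  assumes "copy_family wt xs z b c1 c2 src" "i \<le> j" "j \<le> z"
  shows "b i \<le> b j"
  using assms(2,3)
proof (induction j rule: dec_induct)
  case (step n)
  then have "n < z" by simp
  then have "b n \<le> b (Suc n)" using assms(1) unfolding copy_family_def copy_block_def by auto
  then show ?case using step.IH \<open>n < z\<close> by simp
qed simp

lemma copy_block_inner:
  assumes blk: "copy_block wt xs B C1 C2 S B'" and B': "B' \<le> length xs"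
    and e: "C1 < e1" "e1 \<le> e2" "e2 < C2"
  defines "s \<equiv> S + (e1 - C1)"
  shows "0 < s" "s + (e2 - e1) < length xs"
    "\<forall>t \<le> Suc (e2 - e1). xs ! (s - 1 + t) = xs ! (e1 - 1 + t)"
    "weighted_length wt (take s xs) < weighted_length wt (take e1 xs)"
proof -
  have copy: "weighted_length wt (take S xs) < weighted_length wt (take C1 xs)"
    "S + (C2 - C1) \<le> length xs" "\<And>t. t < C2 - C1 \<Longrightarrow> xs ! (S + t) = xs ! (C1 + t)"
    using blk e unfolding copy_block_def by auto
  have C2: "C2 \<le> length xs" using blk B' unfolding copy_block_def by auto
  show "0 < s" "s + (e2 - e1) < length xs" using e copy(2) by (auto simp: s_def)
  show "\<forall>t \<le> Suc (e2 - e1). xs ! (s - 1 + t) = xs ! (e1 - 1 + t)"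
  proof (intro allI impI)
    fix t assume "t \<le> Suc (e2 - e1)"
    then have "e1 - Suc C1 + t < C2 - C1" "s - 1 + t = S + (e1 - Suc C1 + t)"
      "e1 - 1 + t = C1 + (e1 - Suc C1 + t)"
      using e by (auto simp: s_def)
    then show "xs ! (s - 1 + t) = xs ! (e1 - 1 + t)" using copy(3)[of "e1 - Suc C1 + t"]
      by (simp only:)
  qed
  have "take (e1 - C1) (drop S xs) = take (e1 - C1) (drop C1 xs)"
  proof (rule nth_equalityI)
    show "length (take (e1 - C1) (drop S xs)) = length (take (e1 - C1) (drop C1 xs))"
      using e copy(2) C2 by simp
    fix t assume "t < length (take (e1 - C1) (drop S xs))"
    then have "t < e1 - C1" "t < C2 - C1" "S + t < length xs" "C1 + t < length xs"
      using e copy(2) C2 by auto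
    then show "take (e1 - C1) (drop S xs) ! t = take (e1 - C1) (drop C1 xs) ! t"
      using copy(3)[of t] by simp
  qed
  moreover have "take s xs = take S xs @ take (e1 - C1) (drop S xs)"
    unfolding s_def by (rule take_add)
  moreover have "take e1 xs = take C1 xs @ take (e1 - C1) (drop C1 xs)"
    using e(1) by (metis le_add_diff_inverse less_imp_le take_add)
  ultimately show "weighted_length wt (take s xs) < weighted_length wt (take e1 xs)"
    using copy(1) by simp
qed

lemma interval_containing:
  fixes f :: "nat \<Rightarrow> nat"
  assumes "f 0 \<le> j" "j < f z"
  shows "\<exists>i<z. f i \<le> j \<and> j < f (Suc i)"
  using assms
proof (induction z)
  case (Suc z)
  then show ?case by (cases "j < f z") (auto intro: less_SucI)
qed simp

lemma leftmost_occurrence_uncovered: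
  assumes fam: "copy_family wt xs z b c1 c2 src" and j: "j < length xs"
    and leftmost: "\<forall>j'<j. xs ! j' \<noteq> xs ! j"
  shows "j \<in> uncovered_positions z b c1 c2"
proof -
  obtain i where i: "i < z" "b i \<le> j" "j < b (Suc i)"
    using interval_containing[of b j z] fam j unfolding copy_family_def by auto
  have blk: "copy_block wt xs (b i) (c1 i) (c2 i) (src i) (b (Suc i))"
    using fam i(1) unfolding copy_family_def by blast
  show ?thesis
  proof (cases "c1 i \<le> j \<and> j < c2 i")
    case True
    define t where "t = j - c1 i"
    have t: "t < c2 i - c1 i" "c1 i + t = j" using True by (auto simp: t_def)
    have "c1 i < c2 i" using True by simp
    then have "weighted_length wt (take (src i) xs) < weighted_length wt (take (c1 i) xs)"
      "xs ! (src i + t) = xs ! (c1 i + t)"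
      using blk t(1) unfolding copy_block_def by blast+
    then have "src i + t < j" "xs ! (src i + t) = xs ! j"
      using t(2) less_of_weighted_length_take_less by auto
    then show ?thesis using leftmost by blast
  next
    case False
    then have "j \<in> {b i..<c1 i} \<union> {c2 i..<b (Suc i)}" using i by auto
    then show ?thesis using i(1) unfolding uncovered_positions_def by blast
  qed
qed

lemma card_uncovered_positions: "card (uncovered_positions z b c1 c2) \<le> uncovered z b c1 c2"
proof -
  have "card (uncovered_positions z b c1 c2) \<le> (\<Sum>i<z. card ({b i..<c1 i} \<union> {c2 i..<b (Suc i)}))"
    unfolding uncovered_positions_def by (rule card_UN_le) simp
  also have "\<dots> \<le> uncovered z b c1 c2"
    unfolding uncovered_def by (intro sum_mono order.trans[OF card_Un_le]) simp
  finally show ?thesis .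
qed

lemma first_occurrence:
  assumes "x \<in> set xs"
  obtains j where "j < length xs" "xs ! j = x" "\<forall>j'<j. xs ! j' \<noteq> xs ! j"
proof
  define j where "j = (LEAST j. j < length xs \<and> xs ! j = x)"
  have "\<exists>j. j < length xs \<and> xs ! j = x" using assms by (simp add: in_set_conv_nth)
  then have j: "j < length xs \<and> xs ! j = x" unfolding j_def by (rule LeastI_ex)
  then show "j < length xs" "xs ! j = x" by simp_all
  have "\<not> (j' < length xs \<and> xs ! j' = x)" if "j' < j" for j'
    using that unfolding j_def by (rule not_less_Least)
  then show "\<forall>j'<j. xs ! j' \<noteq> xs ! j" using j by auto
qed

lemma card_set_le_uncovered:
  assumes fam: "copy_family wt xs z b c1 c2 src"
  shows "card (set xs) \<le> uncovered z b c1 c2"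
proof -
  have fin: "finite (uncovered_positions z b c1 c2)"
    unfolding uncovered_positions_def by auto
  have "set xs \<subseteq> (!) xs ` uncovered_positions z b c1 c2"
  proof
    fix x assume "x \<in> set xs"
    then obtain j where "j < length xs" "xs ! j = x" "\<forall>j'<j. xs ! j' \<noteq> xs ! j"
      by (rule first_occurrence)
    then show "x \<in> (!) xs ` uncovered_positions z b c1 c2"
      using leftmost_occurrence_uncovered[OF fam] by blast
  qed
  then have "card (set xs) \<le> card ((!) xs ` uncovered_positions z b c1 c2)"
    using fin by (intro card_mono) auto
  also have "\<dots> \<le> card (uncovered_positions z b c1 c2)"
    using fin by (rule card_image_le)
  also have "\<dots> \<le> uncovered z b c1 c2" by (rule card_uncovered_positions)
  finally show ?thesis .
qed


subsection \<open>Compressing a text by replacing groups with letters\<close>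

lemma groups_before_le_if_no_start:
  assumes "[] \<notin> set gs" "group_starts gs \<inter> {u..<v} = {}"
  shows "groups_before gs v \<le> groups_before gs u"
proof -
  have "j < groups_before gs u" if "j < groups_before gs v" for j
  proof -
    have j: "j < length gs" "group_start gs j < v" using that less_groups_before_iff[OF assms(1)] by auto
    then have "group_start gs j \<in> group_starts gs" unfolding group_starts_def by auto
    then have "group_start gs j < u" using j(2) assms(2) by auto
    then show ?thesis using j(1) less_groups_before_iff[OF assms(1)] by auto
  qed
  then show ?thesis by (meson not_less order.irrefl)
qed

text \<open>If no group starts in [u, v), the groups starting in [B, B') are those starting in
  [B, u) and those starting in [v, B').\<close>

lemma sum_min2_groups_gap:
  assumes "[] \<notin> set gs" "B \<le> u" "u \<le> v" "v \<le> B'" "group_starts gs \<inter> {u..<v} = {}"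
  shows "(\<Sum>j\<in>{groups_before gs B..<groups_before gs B'}. min (length (gs ! j)) 2)
    \<le> (u - B) + (B' - v) + 2"
proof -
  let ?f = "\<lambda>j. min (length (gs ! j)) 2"
  have "groups_before gs v \<le> groups_before gs u"
    by (rule groups_before_le_if_no_start[OF assms(1,5)])
  then have "{groups_before gs B..<groups_before gs B'}
      \<subseteq> {groups_before gs B..<groups_before gs u} \<union> {groups_before gs v..<groups_before gs B'}"
    by auto
  then have "sum ?f {groups_before gs B..<groups_before gs B'}
      \<le> sum ?f ({groups_before gs B..<groups_before gs u} \<union> {groups_before gs v..<groups_before gs B'})"
    by (intro sum_mono2) auto
  also have "\<dots> \<le> sum ?f {groups_before gs B..<groups_before gs u}
      + sum ?f {groups_before gs v..<groups_before gs B'}"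
    using sum_Un_nat[of "{groups_before gs B..<groups_before gs u}"
        "{groups_before gs v..<groups_before gs B'}" ?f] by simp
  also have "\<dots> \<le> (u - B + 1) + (B' - v + 1)"
    using assms by (intro add_mono sum_min2_groups_between) auto
  finally show ?thesis by simp
qed

text \<open>One level of the construction: the text is split into groups, each of which is replaced by
  a single letter (a run letter, a pair letter, or the letter itself for singleton groups).  The
  split only depends on local information: a group never straddles a position where cut holds,
  and inside every fragment a cut occurs close to each end unless the fragment meets at most three
  groups.\<close>

locale compression =
  fixes groups :: "'s list \<Rightarrow> 's list list" and fuse :: "'s list \<Rightarrow> 's"
    and cut :: "'s \<Rightarrow> 's \<Rightarrow> bool" and wt :: "'s \<Rightarrow> nat"
  assumes concat_groups: "concat (groups xs) = xs"
    and Nil_notin_groups: "[] \<notin> set (groups xs)"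
    and groups_append:
      "xs \<noteq> [] \<Longrightarrow> ys \<noteq> [] \<Longrightarrow> cut (last xs) (hd ys) \<Longrightarrow> groups (xs @ ys) = groups xs @ groups ys"
    and fuse_singleton: "fuse [x] = x"
    and wt_fuse: "g \<in> set (groups xs) \<Longrightarrow> wt (fuse g) = weighted_length wt g"
    and cut_near_ends: "c1 < c2 \<Longrightarrow> c2 \<le> length xs \<Longrightarrow>
       (\<exists>e1 e2. c1 < e1 \<and> e1 \<le> e2 \<and> e2 < c2 \<and> cut (xs ! (e1 - 1)) (xs ! e1) \<and> cut (xs ! (e2 - 1)) (xs ! e2) \<and>
          group_starts (groups xs) \<inter> {c1 + 2..<e1} = {} \<and> group_starts (groups xs) \<inter> {e2 + 2..<c2} = {})
       \<or> group_starts (groups xs) \<inter> {c1 + 3..<c2} = {}"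
begin

lemma groups_Nil [simp]: "groups [] = []"
  using concat_groups[of "[]"] Nil_notin_groups[of "[]"] by (cases "groups []") auto

lemma groups_split:
  assumes "0 < e" "e < length xs" "cut (xs ! (e - 1)) (xs ! e)"
  shows "groups xs = groups (take e xs) @ groups (drop e xs)"
proof -
  have "last (take e xs) = xs ! (e - 1)" using assms by (subst last_conv_nth) auto
  moreover have "hd (drop e xs) = xs ! e" using assms by (simp add: hd_drop_conv_nth)
  ultimately have "groups (take e xs @ drop e xs) = groups (take e xs) @ groups (drop e xs)"
    using assms by (intro groups_append) auto
  then show ?thesis by simp
qed

lemma groups_split_twice:
  assumes "0 < e1" "e1 \<le> e2" "e2 < length xs" "cut (xs ! (e1 - 1)) (xs ! e1)" "cut (xs ! (e2 - 1)) (xs ! e2)"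
  shows "groups xs = groups (take e1 xs) @ groups (take (e2 - e1) (drop e1 xs)) @ groups (drop e2 xs)"
proof -
  have "groups (drop e1 xs) = groups (take (e2 - e1) (drop e1 xs)) @ groups (drop (e2 - e1) (drop e1 xs))"
  proof (cases "e1 = e2")
    case False
    then show ?thesis using assms by (intro groups_split) (auto simp: Suc_diff_Suc)
  qed simp
  then show ?thesis using groups_split[OF assms(1) _ assms(4)] assms(2,3) by simp
qed

lemma weighted_length_map_fuse:
  "set G \<subseteq> set (groups xs) \<Longrightarrow> weighted_length wt (map fuse G) = weighted_length wt (concat G)"
  by (induction G) (auto simp: weighted_length_def wt_fuse)

lemma groups_before_length_groups_take:
  assumes "0 < e" "e < length xs" "cut (xs ! (e - 1)) (xs ! e)"
  shows "groups_before (groups xs) e = length (groups (take e xs))"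
proof -
  have "group_start (groups xs) (length (groups (take e xs))) = e"
    using groups_split[OF assms] assms(2) by (simp add: group_start_append concat_groups)
  then show ?thesis
    using groups_before_group_start[OF Nil_notin_groups, of "length (groups (take e xs))" xs]
      groups_split[OF assms] by simp
qed

text \<open>A fragment delimited by cuts at both ends is split in the same way wherever it occurs, so
  a copy of it survives compression.\<close>

lemma compressed_copy:
  assumes e: "0 < e1" "e1 \<le> e2" "e2 < length xs" "cut (xs ! (e1 - 1)) (xs ! e1)" "cut (xs ! (e2 - 1)) (xs ! e2)"
    and s: "0 < s" "s + (e2 - e1) < length xs"
    and copy: "\<forall>t \<le> Suc (e2 - e1). xs ! (s - 1 + t) = xs ! (e1 - 1 + t)"
    and earlier: "weighted_length wt (take s xs) < weighted_length wt (take e1 xs)"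
  defines "gs \<equiv> groups xs"
  shows "copy_block wt (map fuse gs) (groups_before gs e1) (groups_before gs e1)
    (groups_before gs e2) (length (groups (take s xs))) (groups_before gs e2)"
proof -
  define d where "d = e2 - e1"
  have at: "xs ! (s + t) = xs ! (e1 + t)" if "t \<le> d" for t
    using copy[rule_format, of "Suc t"] that e(1) s(1) by (simp add: d_def)
  have mid: "take d (drop s xs) = take d (drop e1 xs)"
    using s e by (intro nth_equalityI) (auto simp: at d_def)
  have cut_s: "cut (xs ! (s - 1)) (xs ! s)" "cut (xs ! (s + d - 1)) (xs ! (s + d))"
  proof -
    have "xs ! (s - 1) = xs ! (e1 - 1)" using copy[rule_format, of 0] by simp
    moreover have "xs ! (s + d - 1) = xs ! (e2 - 1)"
      using copy[rule_format, of d] e s(1) by (simp add: d_def)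
    ultimately show "cut (xs ! (s - 1)) (xs ! s)" "cut (xs ! (s + d - 1)) (xs ! (s + d))"
      using e(4,5) at[of 0] at[of d] e(2) by (simp_all add: d_def)
  qed
  define G1 where "G1 = groups (take e1 xs)"
  define H1 where "H1 = groups (take s xs)"
  define Gm where "Gm = groups (take d (drop e1 xs))"
  have gs: "gs = G1 @ Gm @ groups (drop e2 xs)"
    unfolding gs_def G1_def Gm_def d_def by (rule groups_split_twice[OF e])
  have gs': "gs = H1 @ Gm @ groups (drop (s + d) xs)"
    unfolding gs_def H1_def Gm_def mid[symmetric]
    using groups_split_twice[of s "s + d" xs] s cut_s by (simp add: d_def)
  have gb1: "groups_before gs e1 = length G1"
    unfolding gs_def G1_def using e by (intro groups_before_length_groups_take) auto
  have gb2: "groups_before gs e2 = length G1 + length Gm"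
  proof -
    have "group_start ((G1 @ Gm) @ groups (drop e2 xs)) (length (G1 @ Gm)) = length (concat (G1 @ Gm))"
      by (rule group_start_append)
    then have "group_start gs (length (G1 @ Gm)) = e2"
      using e by (simp add: gs G1_def Gm_def concat_groups d_def)
    moreover have "[] \<notin> set gs" unfolding gs_def by (rule Nil_notin_groups)
    ultimately show ?thesis
      using groups_before_group_start[of gs "length (G1 @ Gm)"] by (simp add: gs)
  qed
  have "take (length H1) (map fuse gs) = map fuse H1" "set H1 \<subseteq> set gs" by (simp_all add: gs')
  then have "weighted_length wt (take (length H1) (map fuse gs)) = weighted_length wt (take s xs)"
    using weighted_length_map_fuse[of H1 xs] by (simp add: H1_def concat_groups gs_def)
  moreover have "take (length G1) (map fuse gs) = map fuse G1" "set G1 \<subseteq> set gs" by (simp_all add: gs)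
  then have "weighted_length wt (take (length G1) (map fuse gs)) = weighted_length wt (take e1 xs)"
    using weighted_length_map_fuse[of G1 xs] by (simp add: G1_def concat_groups gs_def)
  moreover have "map fuse gs ! (length H1 + t) = map fuse gs ! (length G1 + t)" if "t < length Gm" for t
  proof -
    have "map fuse gs ! (length H1 + t) = fuse (Gm ! t)" using that by (subst gs') (simp add: nth_append)
    moreover have "map fuse gs ! (length G1 + t) = fuse (Gm ! t)" using that by (subst gs) (simp add: nth_append)
    ultimately show ?thesis by simp
  qed
  moreover have "length H1 + length Gm \<le> length (map fuse gs)" by (simp add: gs')
  ultimately show ?thesis
    using earlier unfolding copy_block_def gb1 gb2 H1_def by simp
qed


lemma compress_block_cut:
  assumes blk: "copy_block wt xs B C1 C2 S B'" and B': "B' \<le> length xs"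
    and e: "C1 < e1" "e1 \<le> e2" "e2 < C2" "cut (xs ! (e1 - 1)) (xs ! e1)" "cut (xs ! (e2 - 1)) (xs ! e2)"
    and gaps: "group_starts (groups xs) \<inter> {C1 + 2..<e1} = {}" "group_starts (groups xs) \<inter> {e2 + 2..<C2} = {}"
  defines "gs \<equiv> groups xs"
  shows "\<exists>C1' C2' S'. copy_block wt (map fuse gs) (groups_before gs B) C1' C2' S' (groups_before gs B') \<and>
    (\<Sum>j\<in>{groups_before gs B..<C1'} \<union> {C2'..<groups_before gs B'}. min (length (gs ! j)) 2)
      \<le> (C1 - B) + (B' - C2) + 8"
proof -
  let ?f = "\<lambda>j. min (length (gs ! j)) 2"
  define s where "s = S + (e1 - C1)"
  have ne: "[] \<notin> set gs" unfolding gs_def by (rule Nil_notin_groups)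
  have ord: "B \<le> C1" "C1 \<le> C2" "C2 \<le> B'" using blk unfolding copy_block_def by auto
  note inner = copy_block_inner[OF blk B' e(1-3), folded s_def]
  have "copy_block wt (map fuse gs) (groups_before gs e1) (groups_before gs e1)
    (groups_before gs e2) (length (groups (take s xs))) (groups_before gs e2)"
    unfolding gs_def using e ord B' inner by (intro compressed_copy) auto
  moreover have "groups_before gs B \<le> groups_before gs e1" "groups_before gs e2 \<le> groups_before gs B'"
    using e ord by (auto intro: groups_before_mono)
  ultimately have "copy_block wt (map fuse gs) (groups_before gs B) (groups_before gs e1)
      (groups_before gs e2) (length (groups (take s xs))) (groups_before gs B')"
    unfolding copy_block_def by auto
  moreover have "sum ?f {groups_before gs B..<groups_before gs e1} \<le> (C1 + 2 - B) + 2"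
  proof -
    have "group_starts gs \<inter> {min (C1 + 2) e1..<e1} = {}" using gaps by (auto simp: gs_def min_def)
    then show ?thesis using ord e by (intro order.trans[OF sum_min2_groups_gap[OF ne]]) auto
  qed
  moreover have "sum ?f {groups_before gs e2..<groups_before gs B'} \<le> 2 + (B' - C2) + 2"
  proof -
    have "group_starts gs \<inter> {min (e2 + 2) C2..<C2} = {}" using gaps by (auto simp: gs_def min_def)
    then show ?thesis using ord e by (intro order.trans[OF sum_min2_groups_gap[OF ne]]) auto
  qed
  moreover have "sum ?f ({groups_before gs B..<groups_before gs e1} \<union> {groups_before gs e2..<groups_before gs B'})
      \<le> sum ?f {groups_before gs B..<groups_before gs e1} + sum ?f {groups_before gs e2..<groups_before gs B'}"
    using sum_Un_nat[of "{groups_before gs B..<groups_before gs e1}"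
        "{groups_before gs e2..<groups_before gs B'}" ?f] by simp
  ultimately show ?thesis using ord
    by (intro exI[of _ "groups_before gs e1"] exI[of _ "groups_before gs e2"]
        exI[of _ "length (groups (take s xs))"]) simp
qed

text \<open>A block keeps its boundaries (now counted in groups); its core shrinks to the groups strictly
  inside the cuts near its ends, or disappears if it meets at most three groups.  Either way only
  a constant number of groups becomes uncovered.\<close>

lemma compress_block:
  assumes blk: "copy_block wt xs B C1 C2 S B'" and B': "B' \<le> length xs"
  defines "gs \<equiv> groups xs"
  shows "\<exists>C1' C2' S'. copy_block wt (map fuse gs) (groups_before gs B) C1' C2' S' (groups_before gs B') \<and>
    (\<Sum>j\<in>{groups_before gs B..<C1'} \<union> {C2'..<groups_before gs B'}. min (length (gs ! j)) 2)
      \<le> (C1 - B) + (B' - C2) + 8"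
proof -
  have ne: "[] \<notin> set gs" unfolding gs_def by (rule Nil_notin_groups)
  have ord: "B \<le> C1" "C1 \<le> C2" "C2 \<le> B'" using blk unfolding copy_block_def by auto
  show ?thesis
  proof (cases "C1 < C2 \<and> \<not> group_starts gs \<inter> {C1 + 3..<C2} = {}")
    case True
    then have "C1 < C2" "C2 \<le> length xs" "group_starts (groups xs) \<inter> {C1 + 3..<C2} \<noteq> {}"
      using ord B' by (auto simp: gs_def)
    then obtain e1 e2 where "C1 < e1" "e1 \<le> e2" "e2 < C2"
      "cut (xs ! (e1 - 1)) (xs ! e1)" "cut (xs ! (e2 - 1)) (xs ! e2)"
      "group_starts (groups xs) \<inter> {C1 + 2..<e1} = {}" "group_starts (groups xs) \<inter> {e2 + 2..<C2} = {}"
      using cut_near_ends by blast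
    from compress_block_cut[OF blk B' this] show ?thesis unfolding gs_def .
  next
    case False
    define u where "u = min (C1 + 3) C2"
    have "group_starts gs \<inter> {u..<C2} = {}" using False by (auto simp: u_def min_def)
    then have "(\<Sum>j\<in>{groups_before gs B..<groups_before gs B'}. min (length (gs ! j)) 2)
        \<le> (u - B) + (B' - C2) + 2"
      using ord by (intro sum_min2_groups_gap[OF ne]) (auto simp: u_def)
    moreover have "copy_block wt (map fuse gs) (groups_before gs B) (groups_before gs B')
        (groups_before gs B') 0 (groups_before gs B')"
      using ord unfolding copy_block_def by (auto intro: groups_before_mono)
    ultimately show ?thesis
      by (intro exI[of _ "groups_before gs B'"] exI[of _ 0]) (auto simp: u_def)
  qed
qed

lemma length_group_of_new_letter:
  assumes j: "j < length (groups xs)" and new: "map fuse (groups xs) ! j \<notin> set xs"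
  shows "2 \<le> length (groups xs ! j)"
proof (rule ccontr)
  assume short: "\<not> 2 \<le> length (groups xs ! j)"
  have mem: "groups xs ! j \<in> set (groups xs)" using j by (rule nth_mem)
  then have "0 < length (groups xs ! j)" using Nil_notin_groups[of xs] by auto
  then have "length (groups xs ! j) = Suc 0" using short by linarith
  then obtain y where y: "groups xs ! j = [y]" by (auto simp: length_Suc_conv)
  have "[y] \<in> set (groups xs)" using mem by (simp only: y)
  then have "y \<in> (\<Union>g\<in>set (groups xs). set g)" by (rule UN_I) simp
  then have "y \<in> set (concat (groups xs))" by (simp only: set_concat)
  then have "y \<in> set xs" by (simp only: concat_groups)
  moreover have "map fuse (groups xs) ! j = y" using j by (simp add: y fuse_singleton)
  ultimately show False using new by simp
qed

lemma compress_copy_family_blocks: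
  assumes fam: "copy_family wt xs z b c1 c2 src"
  defines "gs \<equiv> groups xs"
  shows "\<exists>c1' c2' src'. copy_family wt (map fuse gs) z (\<lambda>i. groups_before gs (b i)) c1' c2' src' \<and>
    (\<forall>i<z. (\<Sum>j\<in>{groups_before gs (b i)..<c1' i} \<union> {c2' i..<groups_before gs (b (Suc i))}.
        min (length (gs ! j)) 2) \<le> (c1 i - b i) + (b (Suc i) - c2 i) + 8)"
proof -
  have "\<forall>i<z. \<exists>C1' C2' S'. copy_block wt (map fuse gs) (groups_before gs (b i)) C1' C2' S'
      (groups_before gs (b (Suc i))) \<and>
    (\<Sum>j\<in>{groups_before gs (b i)..<C1'} \<union> {C2'..<groups_before gs (b (Suc i))}. min (length (gs ! j)) 2)
      \<le> (c1 i - b i) + (b (Suc i) - c2 i) + 8"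
  proof (intro allI impI)
    fix i assume i: "i < z"
    have "copy_block wt xs (b i) (c1 i) (c2 i) (src i) (b (Suc i))"
      using fam i unfolding copy_family_def by blast
    moreover have "b (Suc i) \<le> length xs"
      using copy_family_boundary_mono[OF fam, of "Suc i" z] fam i unfolding copy_family_def by simp
    ultimately show "\<exists>C1' C2' S'. copy_block wt (map fuse gs) (groups_before gs (b i)) C1' C2' S'
        (groups_before gs (b (Suc i))) \<and>
      (\<Sum>j\<in>{groups_before gs (b i)..<C1'} \<union> {C2'..<groups_before gs (b (Suc i))}. min (length (gs ! j)) 2)
        \<le> (c1 i - b i) + (b (Suc i) - c2 i) + 8"
      unfolding gs_def by (rule compress_block)
  qed
  then obtain c1' c2' src' where "\<forall>i<z. copy_block wt (map fuse gs) (groups_before gs (b i))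
      (c1' i) (c2' i) (src' i) (groups_before gs (b (Suc i))) \<and>
    (\<Sum>j\<in>{groups_before gs (b i)..<c1' i} \<union> {c2' i..<groups_before gs (b (Suc i))}. min (length (gs ! j)) 2)
      \<le> (c1 i - b i) + (b (Suc i) - c2 i) + 8"
    by metis
  moreover have "groups_before gs (b z) = length (map fuse gs)"
    using fam groups_before_length_concat[of gs] Nil_notin_groups unfolding copy_family_def gs_def
    by (simp add: concat_groups)
  ultimately show ?thesis using fam unfolding copy_family_def by auto
qed

text \<open>The leftmost occurrence of a new letter is uncovered, and the group it replaces is not a
  singleton.\<close>

lemma card_new_letters_le:
  assumes fam: "copy_family wt (map fuse (groups xs)) z b c1 c2 src"
  shows "card (set (map fuse (groups xs)) - set xs)
    \<le> (\<Sum>i<z. card {j \<in> {b i..<c1 i} \<union> {c2 i..<b (Suc i)}. 2 \<le> length (groups xs ! j)})"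
proof -
  define xs' where "xs' = map fuse (groups xs)"
  define K where "K = (\<lambda>i. {j \<in> {b i..<c1 i} \<union> {c2 i..<b (Suc i)}. 2 \<le> length (groups xs ! j)})"
  have "set xs' - set xs \<subseteq> (!) xs' ` (\<Union>i<z. K i)"
  proof
    fix x assume x: "x \<in> set xs' - set xs"
    then obtain j where j: "j < length xs'" "xs' ! j = x" "\<forall>j'<j. xs' ! j' \<noteq> xs' ! j"
      by (auto elim: first_occurrence)
    from leftmost_occurrence_uncovered[OF fam[folded xs'_def] j(1) j(3)]
    obtain i where "i < z" "j \<in> {b i..<c1 i} \<union> {c2 i..<b (Suc i)}"
      unfolding uncovered_positions_def by blast
    moreover have "2 \<le> length (groups xs ! j)"
      using length_group_of_new_letter[of j xs] j x unfolding xs'_def by simp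
    ultimately show "x \<in> (!) xs' ` (\<Union>i<z. K i)" using j(2) unfolding K_def by blast
  qed
  moreover have fin: "finite (\<Union>i<z. K i)" unfolding K_def by auto
  ultimately have "card (set xs' - set xs) \<le> card ((!) xs' ` (\<Union>i<z. K i))"
    by (intro card_mono) auto
  also have "\<dots> \<le> card (\<Union>i<z. K i)" using fin by (rule card_image_le)
  also have "\<dots> \<le> (\<Sum>i<z. card (K i))" by (rule card_UN_le) simp
  finally show ?thesis unfolding xs'_def K_def .
qed

lemma compress_copy_family:
  assumes fam: "copy_family wt xs z b c1 c2 src"
  shows "\<exists>b' c1' c2' src'. copy_family wt (map fuse (groups xs)) z b' c1' c2' src' \<and>
    card (set (map fuse (groups xs)) - set xs) + uncovered z b' c1' c2' \<le> uncovered z b c1 c2 + 8 * z"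
proof -
  define gs where "gs = groups xs"
  define b' where "b' = (\<lambda>i. groups_before gs (b i))"
  obtain c1' c2' src' where fam': "copy_family wt (map fuse gs) z b' c1' c2' src'"
    and blocks: "\<forall>i<z. (\<Sum>j\<in>{b' i..<c1' i} \<union> {c2' i..<b' (Suc i)}. min (length (gs ! j)) 2)
        \<le> (c1 i - b i) + (b (Suc i) - c2 i) + 8"
    using compress_copy_family_blocks[OF fam] unfolding gs_def b'_def by blast
  define Z where "Z = (\<lambda>i. {b' i..<c1' i} \<union> {c2' i..<b' (Suc i)})"
  define K where "K = (\<lambda>i. {j \<in> Z i. 2 \<le> length (gs ! j)})"
  have per_block: "card (Z i) = (c1' i - b' i) + (b' (Suc i) - c2' i)"
    "card (Z i) + card (K i) \<le> (c1 i - b i) + (b (Suc i) - c2 i) + 8" if "i < z" for i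
  proof -
    have ord: "b' i \<le> c1' i" "c1' i \<le> c2' i" "c2' i \<le> b' (Suc i)"
      using fam' that unfolding copy_family_def copy_block_def by auto
    then show "card (Z i) = (c1' i - b' i) + (b' (Suc i) - c2' i)"
      unfolding Z_def by (subst card_Un_disjoint) auto
    have "\<forall>j\<in>Z i. 1 \<le> length (gs ! j)"
    proof
      fix j assume "j \<in> Z i"
      then have "j < length gs"
        using ord groups_before_le_length[of gs "b (Suc i)"] unfolding Z_def b'_def by auto
      then show "1 \<le> length (gs ! j)" using Nil_notin_groups nth_mem by (fastforce simp: Suc_le_eq gs_def)
    qed
    then have "(\<Sum>j\<in>Z i. min (length (gs ! j)) 2) = card (Z i) + card (K i)"
      unfolding K_def by (intro sum_min2_eq_card) (auto simp: Z_def)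
    moreover have "(\<Sum>j\<in>Z i. min (length (gs ! j)) 2) \<le> (c1 i - b i) + (b (Suc i) - c2 i) + 8"
      using blocks that unfolding Z_def by blast
    ultimately show "card (Z i) + card (K i) \<le> (c1 i - b i) + (b (Suc i) - c2 i) + 8"
      by simp
  qed
  have "card (set (map fuse gs) - set xs) + uncovered z b' c1' c2' \<le> (\<Sum>i<z. card (K i) + card (Z i))"
    using card_new_letters_le[OF fam'[unfolded gs_def]] per_block(1)
    unfolding uncovered_def K_def Z_def gs_def by (simp add: sum.distrib)
  also have "\<dots> \<le> (\<Sum>i<z. (c1 i - b i) + (b (Suc i) - c2 i) + 8)"
    using per_block(2) by (intro sum_mono) (simp add: add.commute)
  also have "\<dots> = uncovered z b c1 c2 + 8 * z" unfolding uncovered_def by (simp add: sum.distrib)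
  finally show ?thesis using fam' unfolding gs_def by blast
qed

lemma card_new_letters_plus_length_le:
  "card (set (map fuse (groups xs)) - set xs) + length (groups xs) \<le> length xs"
proof -
  define gs where "gs = groups xs"
  define K where "K = {j\<in>{0..<length gs}. 2 \<le> length (gs ! j)}"
  have "set (map fuse gs) - set xs \<subseteq> (!) (map fuse gs) ` K"
    using length_group_of_new_letter[of _ xs] unfolding K_def gs_def
    by (auto simp: in_set_conv_nth)
  then have "card (set (map fuse gs) - set xs) \<le> card ((!) (map fuse gs) ` K)"
    by (intro card_mono) (auto simp: K_def)
  also have "\<dots> \<le> card K" by (intro card_image_le) (auto simp: K_def)
  finally have "card (set (map fuse gs) - set xs) \<le> card K" .
  moreover have "\<forall>j\<in>{0..<length gs}. 1 \<le> length (gs ! j)"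
    using Nil_notin_groups[of xs] nth_mem unfolding gs_def by (fastforce simp: Suc_le_eq)
  then have "length gs + card K = (\<Sum>j\<in>{0..<length gs}. min (length (gs ! j)) 2)"
    unfolding K_def by (subst sum_min2_eq_card) auto
  moreover have "(\<Sum>j\<in>{0..<length gs}. min (length (gs ! j)) 2) \<le> length xs"
    using sum_length_groups[of 0 "length gs" gs] group_start_length[of gs "length gs"] concat_groups[of xs]
      sum_mono[of "{0..<length gs}" "\<lambda>j. min (length (gs ! j)) 2" "\<lambda>j. length (gs ! j)"]
    unfolding gs_def by simp
  ultimately show ?thesis unfolding gs_def by simp
qed

end

subsection \<open>Runs and pairs as compressions\<close>

fun letter_length :: "'a sym \<Rightarrow> nat" where
  "letter_length (Chr c) = 1"
| "letter_length (Run h x d) = d * letter_length x"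
| "letter_length (Pr h a b) = letter_length a + letter_length b"

function run_groups :: "'b list \<Rightarrow> 'b list list" where
  "run_groups [] = []"
| "run_groups (x # xs) = (x # takeWhile (\<lambda>y. y = x) xs) # run_groups (dropWhile (\<lambda>y. y = x) xs)"
  by pat_completeness auto
termination
  by (relation "measure length") (auto simp: le_imp_less_Suc length_dropWhile_le)

definition run_letter :: "nat \<Rightarrow> 'a sym list \<Rightarrow> 'a sym" where
  "run_letter h g = (if length g = 1 then hd g else Run h (hd g) (length g))"

lemma run_compress_eq: "run_compress h xs = map (run_letter h) (run_groups xs)"
  by (induction xs rule: run_groups.induct) (auto simp: run_letter_def Let_def)

lemma concat_run_groups: "concat (run_groups xs) = xs"
  by (induction xs rule: run_groups.induct) simp_all

lemma Nil_notin_run_groups: "[] \<notin> set (run_groups xs)"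
  by (induction xs rule: run_groups.induct) simp_all

lemma run_group_replicate: "g \<in> set (run_groups xs) \<Longrightarrow> g = replicate (length g) (hd g)"
proof (induction xs rule: run_groups.induct)
  case (2 x xs)
  show ?case
  proof (cases "g = x # takeWhile (\<lambda>y. y = x) xs")
    case True
    then have "\<forall>y\<in>set g. y = hd g" by (auto dest: set_takeWhileD)
    then show ?thesis by (simp add: replicate_length_same)
  qed (use 2 in simp)
qed simp

lemma run_groups_append:
  "xs \<noteq> [] \<Longrightarrow> ys \<noteq> [] \<Longrightarrow> last xs \<noteq> hd ys \<Longrightarrow> run_groups (xs @ ys) = run_groups xs @ run_groups ys"
proof (induction xs arbitrary: ys rule: run_groups.induct)
  case (2 x xs)
  show ?case
  proof (cases "\<forall>y\<in>set xs. y = x")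
    case True
    have "last (x # xs) = x" using True by (cases xs rule: rev_cases) auto
    then have "hd ys \<noteq> x" using "2.prems" by simp
    then have "takeWhile (\<lambda>y. y = x) (xs @ ys) = xs" "dropWhile (\<lambda>y. y = x) (xs @ ys) = ys"
      "takeWhile (\<lambda>y. y = x) xs = xs" "dropWhile (\<lambda>y. y = x) xs = []"
      using True "2.prems"(2) by (cases ys; simp)+
    then show ?thesis by (simp only: append_Cons run_groups.simps append.simps)
  next
    case False
    then obtain y where y: "y \<in> set xs" "y \<noteq> x" by blast
    have ne: "dropWhile (\<lambda>y. y = x) xs \<noteq> []" using False by simp
    have "last (dropWhile (\<lambda>y. y = x) xs) = last xs"
      using ne by (metis last_appendR takeWhile_dropWhile_id)
    also have "\<dots> = last (x # xs)" using y by auto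
    finally have "last (dropWhile (\<lambda>y. y = x) xs) \<noteq> hd ys" using "2.prems" by simp
    then have "run_groups (dropWhile (\<lambda>y. y = x) xs @ ys) = run_groups (dropWhile (\<lambda>y. y = x) xs) @ run_groups ys"
      using "2.IH"[OF ne "2.prems"(2)] by simp
    then show ?thesis using y by simp
  qed
qed simp

lemma run_group_start_differs:
  "j \<in> group_starts (run_groups xs) \<Longrightarrow> 0 < j \<Longrightarrow> j < length xs \<and> xs ! (j - 1) \<noteq> xs ! j"
proof (induction xs arbitrary: j rule: run_groups.induct)
  case 1 then show ?case by (simp add: group_starts_def)
next
  case (2 x xs)
  define g where "g = x # takeWhile (\<lambda>y. y = x) xs"
  define d where "d = dropWhile (\<lambda>y. y = x) xs"
  have split: "x # xs = g @ d" unfolding g_def d_def by simp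
  have g_x: "\<forall>y\<in>set g. y = x" unfolding g_def by (auto dest: set_takeWhileD)
  have "j \<in> insert 0 ((+) (length g) ` group_starts (run_groups d))"
    using "2.prems"(1) group_starts_Cons[of g "run_groups d"] unfolding g_def d_def by simp
  then obtain j0 where j0: "j = length g + j0" "j0 \<in> group_starts (run_groups d)"
    using "2.prems"(2) by auto
  show ?case
  proof (cases "j0 = 0")
    case True
    have "run_groups d \<noteq> []" using j0(2) by (auto simp: group_starts_def)
    then have "d \<noteq> []" by auto
    then have "hd d \<noteq> x" "(g @ d) ! j = hd d" "j < length (g @ d)"
      using hd_dropWhile[of "\<lambda>y. y = x" xs] j0 True unfolding d_def
      by (simp_all add: nth_append hd_conv_nth)
    moreover have "(g @ d) ! (j - 1) = x"
    proof -
      have "j - 1 < length g" using j0 True unfolding g_def by simp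
      then show ?thesis using g_x by (simp add: nth_append)
    qed
    ultimately show ?thesis using split by metis
  next
    case False
    then have IH: "j0 < length d \<and> d ! (j0 - 1) \<noteq> d ! j0" using "2.IH" j0 unfolding d_def by simp
    have "j - 1 = length g + (j0 - 1)" using j0 False by simp
    then have "(g @ d) ! j = d ! j0" "(g @ d) ! (j - 1) = d ! (j0 - 1)"
      using j0(1) by (simp_all only: nth_append_length_plus)
    then show ?thesis using split IH j0(1) by (metis length_append nat_add_left_cancel_less)
  qed
qed

lemma run_groups_cut_near_ends:
  assumes "c1 < c2"
  shows "(\<exists>e1 e2. c1 < e1 \<and> e1 \<le> e2 \<and> e2 < c2 \<and> xs ! (e1 - 1) \<noteq> xs ! e1 \<and> xs ! (e2 - 1) \<noteq> xs ! e2 \<and>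
       group_starts (run_groups xs) \<inter> {c1 + 2..<e1} = {} \<and> group_starts (run_groups xs) \<inter> {e2 + 2..<c2} = {})
     \<or> group_starts (run_groups xs) \<inter> {c1 + 3..<c2} = {}"
proof -
  define D where "D = {e. c1 < e \<and> e < c2 \<and> xs ! (e - 1) \<noteq> xs ! e}"
  have fin: "finite D" unfolding D_def by (rule finite_subset[of _ "{..<c2}"]) auto
  have inD: "j \<in> D" if "j \<in> group_starts (run_groups xs)" "c1 < j" "j < c2" for j
    using run_group_start_differs[OF that(1)] that unfolding D_def by auto
  show ?thesis
  proof (cases "D = {}")
    case True
    have "group_starts (run_groups xs) \<inter> {c1 + 3..<c2} = {}"
    proof (intro equals0I)
      fix j assume "j \<in> group_starts (run_groups xs) \<inter> {c1 + 3..<c2}"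
      then have "j \<in> D" using inD by auto
      then show False using True by simp
    qed
    then show ?thesis ..
  next
    case False
    define e1 where "e1 = Min D"
    define e2 where "e2 = Max D"
    have e: "e1 \<in> D" "e2 \<in> D" "e1 \<le> e2" unfolding e1_def e2_def using fin False by auto
    have "group_starts (run_groups xs) \<inter> {c1 + 2..<e1} = {}"
    proof (intro equals0I)
      fix j assume j: "j \<in> group_starts (run_groups xs) \<inter> {c1 + 2..<e1}"
      have "c1 < j" "j < c2" using j e unfolding D_def by auto
      then have "j \<in> D" using inD j by blast
      then have "e1 \<le> j" unfolding e1_def by (rule Min_le[OF fin])
      then show False using j by simp
    qed
    moreover have "group_starts (run_groups xs) \<inter> {e2 + 2..<c2} = {}"
    proof (intro equals0I)
      fix j assume j: "j \<in> group_starts (run_groups xs) \<inter> {e2 + 2..<c2}"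
      have "c1 < j" "j < c2" using j e unfolding D_def by auto
      then have "j \<in> D" using inD j by blast
      then have "j \<le> e2" unfolding e2_def by (rule Max_ge[OF fin])
      then show False using j by simp
    qed
    moreover have "c1 < e1" "e2 < c2" "xs ! (e1 - 1) \<noteq> xs ! e1" "xs ! (e2 - 1) \<noteq> xs ! e2"
      using e unfolding D_def by auto
    ultimately show ?thesis using e(3) by blast
  qed
qed

lemma compression_runs: "compression run_groups (run_letter h) (\<noteq>) letter_length"
proof
  fix xs ys :: "'a sym list"
  show "concat (run_groups xs) = xs" by (rule concat_run_groups)
  show "[] \<notin> set (run_groups xs)" by (rule Nil_notin_run_groups)
  show "xs \<noteq> [] \<Longrightarrow> ys \<noteq> [] \<Longrightarrow> last xs \<noteq> hd ys \<Longrightarrow>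
      run_groups (xs @ ys) = run_groups xs @ run_groups ys"
    by (rule run_groups_append)
next
  fix x :: "'a sym"
  show "run_letter h [x] = x" by (simp add: run_letter_def)
next
  fix g xs :: "'a sym list"
  assume "g \<in> set (run_groups xs)"
  then have g: "g = replicate (length g) (hd g)" by (rule run_group_replicate)
  show "letter_length (run_letter h g) = weighted_length letter_length g"
  proof (cases "length g = 1")
    case True
    then have "g = [hd g]" using g by (metis One_nat_def replicate_Suc replicate_0)
    then show ?thesis by (metis run_letter_def True weighted_length_def list.map sum_list_simps
          add.right_neutral)
  next
    case False
    have "weighted_length letter_length g = length g * letter_length (hd g)"
      unfolding weighted_length_def by (subst g) (simp add: sum_list_replicate)
    then show ?thesis using False by (simp add: run_letter_def)
  qed
next
  fix c1 c2 :: nat and xs :: "'a sym list"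
  assume "c1 < c2"
  then show "(\<exists>e1 e2. c1 < e1 \<and> e1 \<le> e2 \<and> e2 < c2 \<and> xs ! (e1 - 1) \<noteq> xs ! e1 \<and> xs ! (e2 - 1) \<noteq> xs ! e2 \<and>
       group_starts (run_groups xs) \<inter> {c1 + 2..<e1} = {} \<and> group_starts (run_groups xs) \<inter> {e2 + 2..<c2} = {})
     \<or> group_starts (run_groups xs) \<inter> {c1 + 3..<c2} = {}"
    by (rule run_groups_cut_near_ends)
qed

fun pair_groups :: "'b set \<Rightarrow> 'b set \<Rightarrow> 'b list \<Rightarrow> 'b list list" where
  "pair_groups L R (a # b # xs) =
     (if a \<in> L \<and> b \<in> R then [a, b] # pair_groups L R xs else [a] # pair_groups L R (b # xs))"
| "pair_groups L R xs = map (\<lambda>x. [x]) xs"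

definition pair_letter :: "nat \<Rightarrow> 'a sym list \<Rightarrow> 'a sym" where
  "pair_letter h g = (if length g = 2 then Pr h (g ! 0) (g ! 1) else hd g)"

lemma pair_replace_eq: "pair_replace h L R xs = map (pair_letter h) (pair_groups L R xs)"
  by (induction L R xs rule: pair_groups.induct) (auto simp: pair_letter_def)

lemma concat_pair_groups: "concat (pair_groups L R xs) = xs"
  by (induction L R xs rule: pair_groups.induct) auto

lemma Nil_notin_pair_groups: "[] \<notin> set (pair_groups L R xs)"
  by (induction L R xs rule: pair_groups.induct) auto

lemma pair_group_cases: "g \<in> set (pair_groups L R xs) \<Longrightarrow> (\<exists>a. g = [a]) \<or> (\<exists>a b. g = [a, b])"
  by (induction L R xs rule: pair_groups.induct) (auto split: if_splits)

lemma pair_groups_append: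
  "xs \<noteq> [] \<Longrightarrow> ys \<noteq> [] \<Longrightarrow> \<not> (last xs \<in> L \<and> hd ys \<in> R) \<Longrightarrow>
    pair_groups L R (xs @ ys) = pair_groups L R xs @ pair_groups L R ys"
proof (induction L R xs arbitrary: ys rule: pair_groups.induct)
  case (1 L R a b xs)
  show ?case
  proof (cases "a \<in> L \<and> b \<in> R")
    case True
    then show ?thesis using 1 by (cases "xs = []") auto
  next
    case False
    have "pair_groups L R ((a # b # xs) @ ys) = [a] # pair_groups L R ((b # xs) @ ys)"
      using False by simp
    also have "pair_groups L R ((b # xs) @ ys) = pair_groups L R (b # xs) @ pair_groups L R ys"
      using "1.IH"(2)[OF False, of ys] "1.prems" by simp
    also have "[a] # (pair_groups L R (b # xs) @ pair_groups L R ys) = pair_groups L R (a # b # xs) @ pair_groups L R ys"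
      using False by simp
    finally show ?thesis .
  qed
next
  case ("2_2" L R v)
  then show ?case by (cases ys) auto
qed simp

lemma pair_groups_cut_near_ends:
  assumes LR: "L \<inter> R = {}" and "c1 < c2"
  shows "(\<exists>e1 e2. c1 < e1 \<and> e1 \<le> e2 \<and> e2 < c2 \<and>
       \<not> (xs ! (e1 - 1) \<in> L \<and> xs ! e1 \<in> R) \<and> \<not> (xs ! (e2 - 1) \<in> L \<and> xs ! e2 \<in> R) \<and>
       group_starts (pair_groups L R xs) \<inter> {c1 + 2..<e1} = {} \<and>
       group_starts (pair_groups L R xs) \<inter> {e2 + 2..<c2} = {})
     \<or> group_starts (pair_groups L R xs) \<inter> {c1 + 3..<c2} = {}"
proof (cases "c1 + 4 \<le> c2")
  case True
  text \<open>Of two consecutive positions at least one is not an L-R boundary, as L and R are disjoint.\<close>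
  define e1 where "e1 = (if \<not> (xs ! c1 \<in> L \<and> xs ! (c1 + 1) \<in> R) then c1 + 1 else c1 + 2)"
  define e2 where "e2 = (if \<not> (xs ! (c2 - 2) \<in> L \<and> xs ! (c2 - 1) \<in> R) then c2 - 1 else c2 - 2)"
  have "\<not> (xs ! (e1 - 1) \<in> L \<and> xs ! e1 \<in> R)" "\<not> (xs ! (e2 - 1) \<in> L \<and> xs ! e2 \<in> R)"
    using LR True by (auto simp: e1_def e2_def numeral_2_eq_2)
  moreover have "c1 < e1" "e1 \<le> c1 + 2" "e2 < c2" "c2 - 2 \<le> e2"
    using True by (auto simp: e1_def e2_def)
  ultimately show ?thesis using True by (intro disjI1 exI[of _ e1] exI[of _ e2]) auto
qed auto

lemma compression_pairs:
  assumes "L \<inter> R = {}"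
  shows "compression (pair_groups L R) (pair_letter h) (\<lambda>a b. \<not> (a \<in> L \<and> b \<in> R)) letter_length"
proof
  fix xs ys :: "'a sym list"
  show "concat (pair_groups L R xs) = xs" by (rule concat_pair_groups)
  show "[] \<notin> set (pair_groups L R xs)" by (rule Nil_notin_pair_groups)
  show "xs \<noteq> [] \<Longrightarrow> ys \<noteq> [] \<Longrightarrow> \<not> (last xs \<in> L \<and> hd ys \<in> R) \<Longrightarrow>
      pair_groups L R (xs @ ys) = pair_groups L R xs @ pair_groups L R ys"
    by (rule pair_groups_append)
next
  fix x :: "'a sym"
  show "pair_letter h [x] = x" by (simp add: pair_letter_def)
next
  fix g xs :: "'a sym list"
  assume "g \<in> set (pair_groups L R xs)"
  then show "letter_length (pair_letter h g) = weighted_length letter_length g"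
    by (auto simp: pair_letter_def weighted_length_def dest!: pair_group_cases)
next
  fix c1 c2 :: nat and xs :: "'a sym list"
  assume "c1 < c2"
  then show "(\<exists>e1 e2. c1 < e1 \<and> e1 \<le> e2 \<and> e2 < c2 \<and>
       \<not> (xs ! (e1 - 1) \<in> L \<and> xs ! e1 \<in> R) \<and> \<not> (xs ! (e2 - 1) \<in> L \<and> xs ! e2 \<in> R) \<and>
       group_starts (pair_groups L R xs) \<inter> {c1 + 2..<e1} = {} \<and>
       group_starts (pair_groups L R xs) \<inter> {e2 + 2..<c2} = {})
     \<or> group_starts (pair_groups L R xs) \<inter> {c1 + 3..<c2} = {}"
    by (rule pair_groups_cut_near_ends[OF assms])
qed


subsection \<open>The greedy partition\<close>

lemma length_filter_disj:
  "\<forall>x\<in>set ys. \<not> (P x \<and> Q x) \<Longrightarrow>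
    length (filter (\<lambda>x. P x \<or> Q x) ys) = length (filter P ys) + length (filter Q ys)"
  by (induction ys) auto

lemma length_le_length_filter_cover:
  "\<forall>x\<in>set ys. P x \<or> Q x \<Longrightarrow> length ys \<le> length (filter P ys) + length (filter Q ys)"
  by (induction ys) auto

definition cross_cnt :: "'b list \<Rightarrow> 'b set \<Rightarrow> 'b set \<Rightarrow> nat" where
  "cross_cnt xs L R = length (filter (\<lambda>(a, b). (a \<in> L \<and> b \<in> R) \<or> (a \<in> R \<and> b \<in> L)) (adj_pairs xs))"

definition same_cnt :: "'b list \<Rightarrow> 'b set \<Rightarrow> 'b set \<Rightarrow> nat" where
  "same_cnt xs L R = length (filter (\<lambda>(a, b). (a \<in> L \<and> b \<in> L) \<or> (a \<in> R \<and> b \<in> R)) (adj_pairs xs))"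

definition adj_distinct :: "'b list \<Rightarrow> bool" where
  "adj_distinct xs \<longleftrightarrow> (\<forall>(a, b)\<in>set (adj_pairs xs). a \<noteq> b)"

lemma cross_cnt_commute: "cross_cnt xs L R = cross_cnt xs R L"
  unfolding cross_cnt_def by (metis (no_types, lifting) case_prod_conv disj_commute filter_cong prod.collapse)

lemma same_cnt_commute: "same_cnt xs L R = same_cnt xs R L"
  unfolding same_cnt_def by (metis (no_types, lifting) case_prod_conv disj_commute filter_cong prod.collapse)

lemma cross_cnt_insert:
  assumes "c \<notin> L" "c \<notin> R"
  shows "cross_cnt xs (insert c L) R = cross_cnt xs L R + pair_cnt xs c R"
proof -
  have "cross_cnt xs (insert c L) R = length (filter (\<lambda>p. (\<lambda>(a, b). (a \<in> L \<and> b \<in> R) \<or> (a \<in> R \<and> b \<in> L)) p \<or>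
      (\<lambda>(a, b). (a = c \<and> b \<in> R) \<or> (b = c \<and> a \<in> R)) p) (adj_pairs xs))"
    unfolding cross_cnt_def by (intro arg_cong[where f = length] filter_cong) auto
  also have "\<dots> = cross_cnt xs L R + pair_cnt xs c R"
    unfolding cross_cnt_def pair_cnt_def using assms by (intro length_filter_disj) auto
  finally show ?thesis .
qed

lemma same_cnt_insert:
  assumes "c \<notin> L" "c \<notin> R" "adj_distinct xs"
  shows "same_cnt xs (insert c L) R = same_cnt xs L R + pair_cnt xs c L"
proof -
  have "same_cnt xs (insert c L) R = length (filter (\<lambda>p. (\<lambda>(a, b). (a \<in> L \<and> b \<in> L) \<or> (a \<in> R \<and> b \<in> R)) p \<or>
      (\<lambda>(a, b). (a = c \<and> b \<in> L) \<or> (b = c \<and> a \<in> L)) p) (adj_pairs xs))"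
    using assms(3) unfolding same_cnt_def adj_distinct_def
    by (intro arg_cong[where f = length] filter_cong) auto
  also have "\<dots> = same_cnt xs L R + pair_cnt xs c L"
    unfolding same_cnt_def pair_cnt_def using assms by (intro length_filter_disj) auto
  finally show ?thesis .
qed

text \<open>Each letter goes to the side where at least half of its pairs with the letters placed so far
  become crossing; adjacent letters differ, so no pair is counted twice.\<close>

lemma fold_greedy_step_invariant:
  assumes "distinct cs" "set cs \<inter> (L \<union> R) = {}" "L \<inter> R = {}" "adj_distinct xs"
    "same_cnt xs L R \<le> cross_cnt xs L R"
    "fold (greedy_step xs) cs (L, R) = (L', R')"
  shows "L' \<inter> R' = {} \<and> L' \<union> R' = L \<union> R \<union> set cs \<and> same_cnt xs L' R' \<le> cross_cnt xs L' R'"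
  using assms
proof (induction cs arbitrary: L R)
  case (Cons c cs)
  have c: "c \<notin> L" "c \<notin> R" using Cons.prems(2) by auto
  show ?case
  proof (cases "pair_cnt xs c L \<le> pair_cnt xs c R")
    case True
    then have "greedy_step xs c (L, R) = (insert c L, R)" by (simp add: greedy_step_def)
    moreover have "same_cnt xs (insert c L) R \<le> cross_cnt xs (insert c L) R"
      using cross_cnt_insert[OF c] same_cnt_insert[OF c Cons.prems(4)] Cons.prems(5) True by simp
    ultimately show ?thesis
      using Cons.IH[of "insert c L" R] Cons.prems c by auto
  next
    case False
    then have "greedy_step xs c (L, R) = (L, insert c R)" by (simp add: greedy_step_def)
    moreover have "same_cnt xs L (insert c R) \<le> cross_cnt xs L (insert c R)"
      using cross_cnt_insert[OF c(2,1)] same_cnt_insert[OF c(2,1) Cons.prems(4)] Cons.prems(5) False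
      by (simp add: cross_cnt_commute[of xs L] same_cnt_commute[of xs L])
    ultimately show ?thesis
      using Cons.IH[of L "insert c R"] Cons.prems c by auto
  qed
qed simp

lemma cross_cnt_eq_dir_cnt:
  "L \<inter> R = {} \<Longrightarrow> cross_cnt xs L R = dir_cnt xs L R + dir_cnt xs R L"
  unfolding cross_cnt_def dir_cnt_def
  by (subst length_filter_disj[symmetric]) (auto intro!: arg_cong[where f = length] filter_cong)

text \<open>Every adjacent pair is crossing or same-sided, and by the invariant at least half of them
  cross; the better of the two directions gets a quarter of all pairs.\<close>

lemma partition_LR_quarter:
  assumes "adj_distinct xs" "partition_LR rk xs = (L, R)"
  shows "L \<inter> R = {}" "length xs \<le> 4 * dir_cnt xs L R + 1"
proof -
  obtain L0 R0 where f: "fold (greedy_step xs) (sort_key rk (remdups xs)) ({}, {}) = (L0, R0)"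
    by (metis surj_pair)
  have inv: "L0 \<inter> R0 = {}" "L0 \<union> R0 = set xs" "same_cnt xs L0 R0 \<le> cross_cnt xs L0 R0"
    using fold_greedy_step_invariant[OF _ _ _ assms(1) _ f] by (simp_all add: same_cnt_def cross_cnt_def)
  have "length (adj_pairs xs) \<le> cross_cnt xs L0 R0 + same_cnt xs L0 R0"
    unfolding cross_cnt_def same_cnt_def
  proof (intro length_le_length_filter_cover ballI)
    fix p assume p: "p \<in> set (adj_pairs xs)"
    obtain a b where ab: "p = (a, b)" by (cases p)
    have "set (tl xs) \<subseteq> set xs" by (cases xs) auto
    then have "a \<in> set xs" "b \<in> set xs" using p ab unfolding adj_pairs_def
      by (auto dest: set_zip_leftD set_zip_rightD)
    then show "(\<lambda>(a, b). (a \<in> L0 \<and> b \<in> R0) \<or> (a \<in> R0 \<and> b \<in> L0)) p \<or>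
        (\<lambda>(a, b). (a \<in> L0 \<and> b \<in> L0) \<or> (a \<in> R0 \<and> b \<in> R0)) p"
      using inv(2) ab by auto
  qed
  moreover have "length (adj_pairs xs) = length xs - 1" by (simp add: adj_pairs_def)
  moreover have "cross_cnt xs L0 R0 = dir_cnt xs L0 R0 + dir_cnt xs R0 L0"
    using inv(1) by (rule cross_cnt_eq_dir_cnt)
  moreover have "(L, R) = (if dir_cnt xs L0 R0 < dir_cnt xs R0 L0 then (R0, L0) else (L0, R0))"
    using assms(2) f unfolding partition_LR_def by simp
  ultimately show "L \<inter> R = {}" "length xs \<le> 4 * dir_cnt xs L R + 1"
    using inv by (auto split: if_splits)
qed

lemma length_pair_replace:
  "L \<inter> R = {} \<Longrightarrow> length (pair_replace h L R xs) + dir_cnt xs L R = length xs"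
proof (induction h L R xs rule: pair_replace.induct)
  case (1 h L R a b xs)
  have dir: "dir_cnt (a # b # xs) L R = (if a \<in> L \<and> b \<in> R then 1 else 0) + dir_cnt (b # xs) L R"
    by (simp add: dir_cnt_def adj_pairs_def)
  show ?case
  proof (cases "a \<in> L \<and> b \<in> R")
    case True
    then have "dir_cnt (b # xs) L R = dir_cnt xs L R"
      using "1.prems" by (cases xs) (auto simp: dir_cnt_def adj_pairs_def)
    then show ?thesis using 1 True dir by simp
  next
    case False
    then have eq: "pair_replace h L R (a # b # xs) = a # pair_replace h L R (b # xs)"
      by (simp only: pair_replace.simps if_False)
    have "dir_cnt (a # b # xs) L R = dir_cnt (b # xs) L R" using dir False by simp
    then show ?thesis unfolding eq using "1.IH"(2)[OF False "1.prems"] by simp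
  qed
qed (simp_all add: dir_cnt_def adj_pairs_def)


fun level_tag :: "'a sym \<Rightarrow> nat" where
  "level_tag (Chr c) = 0"
| "level_tag (Run h x d) = Suc h"
| "level_tag (Pr h a b) = Suc h"

lemma set_run_compress_subset: "set (run_compress h xs) \<subseteq> set xs \<union> {y. level_tag y = Suc h}"
proof (induction h xs rule: run_compress.induct)
  case (2 h x xs)
  have "set (dropWhile (\<lambda>y. y = x) xs) \<subseteq> set xs" by (rule set_dropWhileD[THEN subsetI])
  then show ?case using 2 by (auto simp: Let_def)
qed simp

lemma set_pair_replace_subset: "set (pair_replace h L R xs) \<subseteq> set xs \<union> {y. level_tag y = Suc h}"
  by (induction h L R xs rule: pair_replace.induct) auto

lemma level_tag_ttog_level: "x \<in> set (ttog_level rk T h) \<Longrightarrow> level_tag x \<le> h"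
proof (induction h arbitrary: x)
  case (Suc h)
  have "set (ttog_level rk T (Suc h)) \<subseteq> set (ttog_level rk T h) \<union> {y. level_tag y = Suc h}"
  proof (cases "even h")
    case True
    then show ?thesis by (simp add: ttog_step_def set_run_compress_subset)
  next
    case False
    obtain L R where "partition_LR rk (ttog_level rk T h) = (L, R)" by (metis surj_pair)
    then show ?thesis using False by (simp add: ttog_step_def set_pair_replace_subset)
  qed
  then show ?case using Suc by fastforce
qed auto

lemma adj_distinct_Cons: "adj_distinct (a # ys) \<longleftrightarrow> (ys = [] \<or> a \<noteq> hd ys) \<and> adj_distinct ys"
  by (cases ys) (auto simp: adj_distinct_def adj_pairs_def)

lemma hd_run_compress:
  "xs \<noteq> [] \<Longrightarrow> hd (run_compress h xs) = hd xs \<or> (\<exists>k. hd (run_compress h xs) = Run h (hd xs) k)"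
  by (cases xs) (auto simp: Let_def)

text \<open>Neighbouring letters of a run compression come from different maximal runs; a new run letter
  differs from the old letters by its tag h + 1.\<close>

lemma adj_distinct_run_compress:
  "\<forall>x\<in>set xs. level_tag x \<le> h \<Longrightarrow> adj_distinct (run_compress h xs)"
proof (induction h xs rule: run_compress.induct)
  case (2 h x xs)
  define d where "d = dropWhile (\<lambda>y. y = x) xs"
  define k where "k = length (takeWhile (\<lambda>y. y = x) xs)"
  define l where "l = (if k = 0 then x else Run h x (Suc k))"
  have rc: "run_compress h (x # xs) = l # run_compress h d"
    unfolding l_def k_def d_def by (simp add: Let_def)
  have d_sub: "set d \<subseteq> set xs" unfolding d_def by (rule set_dropWhileD[THEN subsetI])
  have IH: "adj_distinct (run_compress h d)" using 2 d_sub unfolding d_def by auto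
  have "l \<noteq> hd (run_compress h d)" if ne: "d \<noteq> []"
  proof -
    have hd_d: "hd d \<noteq> x" using hd_dropWhile[of "\<lambda>y. y = x" xs] ne unfolding d_def by simp
    have "hd d \<in> set xs" using ne d_sub hd_in_set by blast
    then have tags: "level_tag (hd d) \<le> h" "level_tag x \<le> h" using "2.prems" by auto
    from hd_run_compress[OF ne, of h] show ?thesis
    proof
      assume "hd (run_compress h d) = hd d"
      then show ?thesis unfolding l_def using hd_d tags by (auto dest: arg_cong[of _ _ level_tag])
    next
      assume "\<exists>k'. hd (run_compress h d) = Run h (hd d) k'"
      then show ?thesis unfolding l_def using hd_d tags by auto
    qed
  qed
  moreover have "run_compress h d = [] \<longleftrightarrow> d = []" by (cases d) (auto simp: Let_def)
  ultimately show ?case unfolding rc adj_distinct_Cons using IH by blast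
qed (simp add: adj_distinct_def adj_pairs_def)

lemma adj_distinct_odd_level: "odd h \<Longrightarrow> adj_distinct (ttog_level rk T h)"
proof -
  assume "odd h"
  then obtain h' where h': "h = Suc h'" "even h'" by (metis odd_Suc_minus_one even_Suc)
  then show ?thesis
    using adj_distinct_run_compress[of "ttog_level rk T h'" h'] level_tag_ttog_level[of _ rk T h']
    by (simp add: ttog_step_def)
qed

lemma ttog_level_Suc_compression:
  obtains groups fuse cut where "compression groups fuse cut letter_length"
    "ttog_level rk T (Suc h) = map fuse (groups (ttog_level rk T h))"
proof (cases "even h")
  case True
  then show ?thesis
    using that[OF compression_runs[of h]] by (simp add: ttog_step_def run_compress_eq)
next
  case False
  obtain L R where p: "partition_LR rk (ttog_level rk T h) = (L, R)" by (metis surj_pair)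
  then have "L \<inter> R = {}" using partition_LR_quarter(1) adj_distinct_odd_level[OF False] by blast
  then show ?thesis
    using that[OF compression_pairs[of L R h]] False p by (simp add: ttog_step_def pair_replace_eq)
qed

lemma ttog_level_Suc_copy_family:
  assumes "copy_family letter_length (ttog_level rk T h) z b c1 c2 src"
  shows "\<exists>b' c1' c2' src'. copy_family letter_length (ttog_level rk T (Suc h)) z b' c1' c2' src' \<and>
    card (set (ttog_level rk T (Suc h)) - set (ttog_level rk T h)) + uncovered z b' c1' c2'
      \<le> uncovered z b c1 c2 + 8 * z"
proof -
  obtain groups fuse cut where comp: "compression groups fuse cut letter_length"
    and eq: "ttog_level rk T (Suc h) = map fuse (groups (ttog_level rk T h))"
    by (rule ttog_level_Suc_compression)
  show ?thesis unfolding eq by (rule compression.compress_copy_family[OF comp assms])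
qed

lemma ttog_level_Suc_new_letters:
  "card (set (ttog_level rk T (Suc h)) - set (ttog_level rk T h)) + length (ttog_level rk T (Suc h))
    \<le> length (ttog_level rk T h)"
proof -
  obtain groups fuse cut where "compression groups fuse cut letter_length"
    and eq: "ttog_level rk T (Suc h) = map fuse (groups (ttog_level rk T h))"
    by (rule ttog_level_Suc_compression)
  then show ?thesis unfolding eq using compression.card_new_letters_plus_length_le by fastforce
qed

lemma length_ttog_level_two_steps:
  assumes "even h"
  shows "4 * length (ttog_level rk T (Suc (Suc h))) \<le> 3 * length (ttog_level rk T h) + 1"
proof -
  define xs where "xs = ttog_level rk T (Suc h)"
  obtain L R where p: "partition_LR rk xs = (L, R)" by (metis surj_pair)
  have "odd (Suc h)" using assms by simp
  note quarter = partition_LR_quarter[OF adj_distinct_odd_level[OF this] p[unfolded xs_def]]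
  have "ttog_level rk T (Suc (Suc h)) = pair_replace (Suc h) L R xs"
    using assms p by (simp add: ttog_step_def xs_def)
  then have "length (ttog_level rk T (Suc (Suc h))) + dir_cnt xs L R = length xs"
    using length_pair_replace[OF quarter(1)] by (simp add: xs_def)
  moreover have "length xs \<le> length (ttog_level rk T h)"
    using ttog_level_Suc_new_letters[of rk T h] by (simp add: xs_def)
  ultimately show ?thesis using quarter(2) by (simp add: xs_def)
qed

lemma length_ttog_level_even:
  "real (length (ttog_level rk T (2 * k))) \<le> 1 + (3 / 4) ^ k * real (length T)"
proof (induction k)
  case (Suc k)
  have "4 * length (ttog_level rk T (2 * Suc k)) \<le> 3 * length (ttog_level rk T (2 * k)) + 1"
    using length_ttog_level_two_steps[of "2 * k" rk T] by simp
  then have "4 * real (length (ttog_level rk T (2 * Suc k))) \<le> 3 * real (length (ttog_level rk T (2 * k))) + 1"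
    by linarith
  then show ?case using Suc by simp
qed simp


subsection \<open>The LZ77 factorization as a copy family\<close>

declare lz_count.simps [simp del]

lemma lz_len_props:
  assumes "p < length T"
  shows "1 \<le> lz_len T p" "lz_len T p \<le> length T - p"
    "T ! p \<in> set (take p T) \<Longrightarrow> sublist (take (lz_len T p) (drop p T)) (take p T)"
proof -
  define P where "P = (\<lambda>l. l \<le> length T - p \<and> sublist (take l (drop p T)) (take p T))"
  have "1 \<le> lz_len T p \<and> lz_len T p \<le> length T - p \<and>
    (T ! p \<in> set (take p T) \<longrightarrow> sublist (take (lz_len T p) (drop p T)) (take p T))"
  proof (cases "T ! p \<in> set (take p T)")
    case True
    have "take 1 (drop p T) = [T ! p]" using assms by (simp add: take_Suc_conv_app_nth take_drop)
    moreover obtain us vs where split: "take p T = us @ [T ! p] @ vs"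
      using True by (metis split_list append_Cons append_Nil)
    have "sublist [T ! p] (take p T)" unfolding split by (rule sublist_appendI)
    ultimately have "P 1" unfolding P_def using assms by simp
    moreover have "\<And>l. P l \<Longrightarrow> l \<le> length T - p" unfolding P_def by simp
    ultimately have "P (Greatest P)" "1 \<le> Greatest P"
      by (blast intro: GreatestI_nat Greatest_le_nat)+
    moreover have "lz_len T p = Greatest P" unfolding lz_len_def P_def using True by simp
    ultimately show ?thesis unfolding P_def by simp
  qed (use assms in \<open>simp add: lz_len_def\<close>)
  then show "1 \<le> lz_len T p" "lz_len T p \<le> length T - p"
    "T ! p \<in> set (take p T) \<Longrightarrow> sublist (take (lz_len T p) (drop p T)) (take p T)"
    by auto
qed

lemma weighted_length_take_map_Chr:
  "weighted_length letter_length (take k (map Chr T)) = min k (length T)"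
proof -
  have "weighted_length letter_length (map Chr xs) = length xs" for xs :: "'a list"
    by (induction xs) (auto simp: weighted_length_def)
  then show ?thesis by (simp add: take_map)
qed

text \<open>A phrase is a copy of an earlier fragment, except for a fresh letter, which is left
  uncovered.\<close>

lemma lz_phrase_copy_block:
  assumes p: "p < length T"
  shows "\<exists>C1 C2 S. copy_block letter_length (map Chr T) p C1 C2 S (p + lz_len T p) \<and>
    (C1 - p) + (p + lz_len T p - C2) \<le> 1"
proof (cases "T ! p \<in> set (take p T)")
  case True
  define l where "l = lz_len T p"
  obtain us vs where split: "take p T = us @ take l (drop p T) @ vs"
    using lz_len_props(3)[OF p True] unfolding l_def sublist_def by blast
  have l: "1 \<le> l" "l \<le> length T - p" using lz_len_props[OF p] unfolding l_def by auto
  have "length (take p T) = p" "length (take l (drop p T)) = l" using p l by simp_all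
  then have us: "length us + l \<le> p" using arg_cong[OF split, of length] by simp
  have copy: "T ! (length us + t) = T ! (p + t)" if "t < l" for t
  proof -
    have "take p T ! (length us + t) = take l (drop p T) ! t" using split that l by (simp add: nth_append)
    then show ?thesis using that us l by simp
  qed
  show ?thesis
  proof (intro exI conjI)
    show "copy_block letter_length (map Chr T) p p (p + l) (length us) (p + lz_len T p)"
      unfolding copy_block_def weighted_length_take_map_Chr using us l copy p
      by (auto simp: l_def)
  qed (simp add: l_def)
next
  case False
  then have "lz_len T p = 1" by (simp add: lz_len_def)
  then show ?thesis by (intro exI[of _ "p + 1"] exI[of _ 0]) (simp add: copy_block_def)
qed

lemma lz_copy_family_from:
  "p \<le> length T \<Longrightarrow> \<exists>b c1 c2 src. b 0 = p \<and> b (lz_count T p) = length T \<and>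
     (\<forall>i < lz_count T p. copy_block letter_length (map Chr T) (b i) (c1 i) (c2 i) (src i) (b (Suc i)) \<and>
        (c1 i - b i) + (b (Suc i) - c2 i) \<le> 1)"
proof (induction T p rule: lz_count.induct)
  case (1 T p)
  show ?case
  proof (cases "length T \<le> p")
    case True
    then have "lz_count T p = 0" by (subst lz_count.simps) simp
    then show ?thesis using True "1.prems" by (intro exI[of _ "\<lambda>_. p"]) simp
  next
    case False
    define l where "l = lz_len T p"
    have l: "1 \<le> l" "l \<le> length T - p" using lz_len_props[of p T] False unfolding l_def by auto
    have count: "lz_count T p = Suc (lz_count T (p + l))"
      using False l by (subst lz_count.simps) (simp add: l_def max_def)
    have "p + max 1 (lz_len T p) \<le> length T" using l unfolding l_def by (simp add: max_def)
    from "1.IH"[OF False this] obtain b c1 c2 src where fam: "b 0 = p + l" "b (lz_count T (p + l)) = length T"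
      "\<forall>i < lz_count T (p + l). copy_block letter_length (map Chr T) (b i) (c1 i) (c2 i) (src i) (b (Suc i)) \<and>
        (c1 i - b i) + (b (Suc i) - c2 i) \<le> 1"
      using l unfolding l_def by (auto simp: max_def split: if_splits)
    obtain x1 x2 s0 where first: "copy_block letter_length (map Chr T) p x1 x2 s0 (p + l)"
      "(x1 - p) + (p + l - x2) \<le> 1"
      using lz_phrase_copy_block[of p T] False unfolding l_def by auto
    let ?shift = "\<lambda>x f i. if i = 0 then x else f (i - 1)"
    show ?thesis
    proof (intro exI conjI allI impI)
      show "?shift p b 0 = p" "?shift p b (lz_count T p) = length T" using fam count by auto
      fix i assume i: "i < lz_count T p"
      show "copy_block letter_length (map Chr T) (?shift p b i) (?shift x1 c1 i) (?shift x2 c2 i)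
          (?shift s0 src i) (?shift p b (Suc i))"
        "(?shift x1 c1 i - ?shift p b i) + (?shift p b (Suc i) - ?shift x2 c2 i) \<le> 1"
        using first fam i count by (cases i; auto)+
    qed
  qed
qed

lemma lz_copy_family:
  "\<exists>b c1 c2 src. copy_family letter_length (map Chr T) (lz77_size T) b c1 c2 src \<and>
    uncovered (lz77_size T) b c1 c2 \<le> lz77_size T"
proof -
  obtain b c1 c2 src where fam: "b 0 = 0" "b (lz77_size T) = length T"
    "\<forall>i < lz77_size T. copy_block letter_length (map Chr T) (b i) (c1 i) (c2 i) (src i) (b (Suc i)) \<and>
      (c1 i - b i) + (b (Suc i) - c2 i) \<le> 1"
    using lz_copy_family_from[of 0 T] unfolding lz77_size_def by auto
  have "uncovered (lz77_size T) b c1 c2 \<le> (\<Sum>i<lz77_size T. 1)"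
    unfolding uncovered_def using fam(3) by (intro sum_mono) auto
  then show ?thesis using fam unfolding copy_family_def
    by (intro exI[of _ b] exI[of _ c1] exI[of _ c2] exI[of _ src]) auto
qed

lemma lz77_size_bounds: "T \<noteq> [] \<Longrightarrow> 1 \<le> lz77_size T \<and> lz77_size T \<le> length T"
proof -
  have "lz_count T p \<le> length T - p" for p
  proof (induction T p rule: lz_count.induct)
    case (1 T p)
    then show ?case by (subst lz_count.simps) auto
  qed
  moreover assume "T \<noteq> []"
  then have "1 \<le> lz_count T 0" by (subst lz_count.simps) simp
  ultimately show ?thesis unfolding lz77_size_def by (metis diff_zero)
qed


definition letters_upto :: "('a sym \<Rightarrow> nat) \<Rightarrow> 'a list \<Rightarrow> nat \<Rightarrow> 'a sym set" where
  "letters_upto rk T h = (\<Union>m\<le>h. set (ttog_level rk T m))"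

lemma card_letters_upto_Suc:
  "card (letters_upto rk T (Suc h))
    \<le> card (letters_upto rk T h) + card (set (ttog_level rk T (Suc h)) - set (ttog_level rk T h))"
proof -
  have "letters_upto rk T (Suc h)
      = letters_upto rk T h \<union> (set (ttog_level rk T (Suc h)) - set (ttog_level rk T h))"
    unfolding letters_upto_def by (auto simp: atMost_Suc)
  then show ?thesis by (simp add: card_Un_le)
qed

lemma letters_upto_copy_family:
  "\<exists>b c1 c2 src. copy_family letter_length (ttog_level rk T h) (lz77_size T) b c1 c2 src \<and>
     card (letters_upto rk T h) + uncovered (lz77_size T) b c1 c2 \<le> 2 * lz77_size T + 8 * lz77_size T * h"
proof (induction h)
  case 0
  obtain b c1 c2 src where fam: "copy_family letter_length (map Chr T) (lz77_size T) b c1 c2 src"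
    and small: "uncovered (lz77_size T) b c1 c2 \<le> lz77_size T"
    using lz_copy_family by blast
  have "card (letters_upto rk T 0) \<le> uncovered (lz77_size T) b c1 c2"
    using card_set_le_uncovered[OF fam] by (simp add: letters_upto_def)
  then show ?case using fam small by (intro exI[of _ b] exI[of _ c1] exI[of _ c2] exI[of _ src]) simp
next
  case (Suc h)
  then obtain b c1 c2 src where fam: "copy_family letter_length (ttog_level rk T h) (lz77_size T) b c1 c2 src"
    and bound: "card (letters_upto rk T h) + uncovered (lz77_size T) b c1 c2 \<le> 2 * lz77_size T + 8 * lz77_size T * h"
    by blast
  from ttog_level_Suc_copy_family[OF fam] obtain b' c1' c2' src' where
    fam': "copy_family letter_length (ttog_level rk T (Suc h)) (lz77_size T) b' c1' c2' src'"
    and step: "card (set (ttog_level rk T (Suc h)) - set (ttog_level rk T h)) + uncovered (lz77_size T) b' c1' c2'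
      \<le> uncovered (lz77_size T) b c1 c2 + 8 * lz77_size T"
    by blast
  have "card (letters_upto rk T (Suc h)) + uncovered (lz77_size T) b' c1' c2'
      \<le> 2 * lz77_size T + 8 * lz77_size T * Suc h"
    using card_letters_upto_Suc[of rk T h] bound step by simp
  then show ?case using fam' by blast
qed

text \<open>Past level h0 every new letter shortens the text, so the letters created there are paid
  for by the length of T_h0.\<close>

lemma card_letters_upto_le:
  "card (letters_upto rk T h) \<le> 2 * lz77_size T + 8 * lz77_size T * h0 + length (ttog_level rk T h0)"
proof (cases "h \<le> h0")
  case True
  have "card (letters_upto rk T h) \<le> 2 * lz77_size T + 8 * lz77_size T * h"
    using letters_upto_copy_family[of rk T h] by auto
  also have "\<dots> \<le> 2 * lz77_size T + 8 * lz77_size T * h0" using True by simp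
  finally show ?thesis by simp
next
  case False
  have "card (letters_upto rk T h') + length (ttog_level rk T h')
      \<le> card (letters_upto rk T h0) + length (ttog_level rk T h0)" if "h0 \<le> h'" for h'
    using that
  proof (induction h' rule: dec_induct)
    case (step h')
    then show ?case
      using card_letters_upto_Suc[of rk T h'] ttog_level_Suc_new_letters[of rk T h'] by simp
  qed simp
  moreover have "card (letters_upto rk T h0) \<le> 2 * lz77_size T + 8 * lz77_size T * h0"
    using letters_upto_copy_family[of rk T h0] by auto
  ultimately show ?thesis using False by (meson add_le_mono1 le_add1 nat_le_linear order_trans)
qed

lemma card_ttog_letters_le:
  "card (ttog_letters rk T) \<le> 2 * lz77_size T + 8 * lz77_size T * h0 + length (ttog_level rk T h0)"
proof (cases "finite (ttog_letters rk T)")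
  case True
  have "\<forall>x\<in>ttog_letters rk T. \<exists>h. x \<in> set (ttog_level rk T h)" unfolding ttog_letters_def by blast
  then obtain H where H: "\<forall>x\<in>ttog_letters rk T. x \<in> set (ttog_level rk T (H x))" by metis
  have "ttog_letters rk T \<subseteq> letters_upto rk T (Max (H ` ttog_letters rk T))"
    using H True unfolding letters_upto_def by fastforce
  then have "card (ttog_letters rk T) \<le> card (letters_upto rk T (Max (H ` ttog_letters rk T)))"
    by (intro card_mono) (simp_all add: letters_upto_def)
  then show ?thesis using card_letters_upto_le order_trans by blast
qed simp

lemma exists_log_rounds:
  fixes N z :: real
  assumes "0 < z" "z \<le> N"
  shows "\<exists>k. (3 / 4) ^ k * N \<le> z \<and> real k \<le> 3 * (1 + log 2 (N / z))"
proof -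
  define j where "j = nat \<lceil>log 2 (N / z)\<rceil>"
  have "0 \<le> log 2 (N / z)" using assms by simp
  then have j: "log 2 (N / z) \<le> real j" "real j \<le> 1 + log 2 (N / z)" unfolding j_def by linarith+
  have "N / z \<le> 2 ^ j"
    using j(1) assms by (subst (asm) log_le_iff) (auto simp: powr_realpow)
  then have "N \<le> 2 ^ j * z" using assms by (simp add: divide_le_eq)
  have "(3 / 4 :: real) ^ (3 * j) = ((3 / 4) ^ 3) ^ j" by (simp add: power_mult)
  also have "\<dots> \<le> (1 / 2) ^ j" by (intro power_mono) (simp_all add: eval_nat_numeral)
  finally have "(3 / 4) ^ (3 * j) * N \<le> (1 / 2) ^ j * (2 ^ j * z)"
    using \<open>N \<le> 2 ^ j * z\<close> assms by (intro mult_mono) auto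
  also have "\<dots> = z" by (simp add: power_one_over)
  finally show ?thesis using j by (intro exI[of _ "3 * j"]) simp
qed

theorem lemma14:
  "\<exists>C::real. \<forall>(T::nat list) (rk::nat sym \<Rightarrow> nat).
     inj rk \<longrightarrow> T \<noteq> [] \<longrightarrow>
     real (card (ttog_letters rk T))
       \<le> C * real (lz77_size T) * (1 + log 2 (real (length T) / real (lz77_size T)))"
proof (intro exI[of _ 52] allI impI)
  fix T :: "nat list" and rk :: "nat sym \<Rightarrow> nat"
  \<comment> \<open>the bound holds for every ranking rk\<close>
  assume "T \<noteq> []"
  define z where "z = real (lz77_size T)"
  define L where "L = log 2 (real (length T) / z)"
  have z: "1 \<le> z" "z \<le> real (length T)" using lz77_size_bounds[OF \<open>T \<noteq> []\<close>] by (auto simp: z_def)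
  then have "1 \<le> real (length T) / z" by simp
  then have "0 \<le> L" by (simp add: L_def)
  obtain k where k: "(3 / 4) ^ k * real (length T) \<le> z" "real k \<le> 3 * (1 + L)"
    using exists_log_rounds[of z "real (length T)"] z unfolding L_def by auto
  have "real (card (ttog_letters rk T))
      \<le> real (2 * lz77_size T + 8 * lz77_size T * (2 * k) + length (ttog_level rk T (2 * k)))"
    by (rule of_nat_mono[OF card_ttog_letters_le])
  also have "\<dots> = 2 * z + 16 * z * real k + real (length (ttog_level rk T (2 * k)))"
    by (simp add: z_def)
  also have "\<dots> \<le> 2 * z + 16 * z * (3 * (1 + L)) + (1 + z)"
    using length_ttog_level_even[of rk T k] k z by (intro add_mono mult_left_mono) auto
  also have "\<dots> \<le> 52 * z * (1 + L)"
    using z mult_nonneg_nonneg[OF \<open>0 \<le> L\<close>, of z] by (simp add: algebra_simps)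
  finally show "real (card (ttog_letters rk T))
      \<le> 52 * real (lz77_size T) * (1 + log 2 (real (length T) / real (lz77_size T)))"
    unfolding z_def L_def by simp
qed

end
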